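(* Let $\pi_p$ be any probability on $\{0,\dots,p\}$ and $g$ any probability density on $\mathbb R$ symmetric about $0$, and let $\Pi$ be the prior described below. Then there is a universal constant $C$ such that for any $\beta^0,\beta^*\in\mathbb R^p$ and $r\ge1$, \[ \mathbb E_{\beta^0}\Pi\Big(\beta:\|X(\beta-\beta^0)\|_2>7\|X(\beta^*-\beta^0)\|_2+4\sqrt{\log(C_\pi^2D_{\beta^*})}+8\sqrt r\ \Big|\ Y\Big)\le Ce^{-r}. \]
   Context: Observations follow $Y=X\beta+\varepsilon$ with $X$ a deterministic real $n\times p$ matrix and $\varepsilon\sim N_n(0,I_n)$; $\mathbb E_{\beta^0}$ is expectation when $Y\sim N_n(X\beta^0,I_n)$. $S_\beta=\{i:\beta_i\ne0\}$, $\beta_S=(\beta_i)_{i\in S}$. Prior $\Pi$ on $\mathbb R^p$: draw $s\sim\pi_p$, then $S$ uniform among subsets of $\{1,\dots,p\}$ of size $s$, then $\beta_i$, $i\in S$, i.i.d. with density $g$, $\beta_i=0$ for $i\notin S$. Posterior $\Pi(B\mid Y)=\int_Be^{-\|Y-X\beta\|_2^2/2}d\Pi(\beta)/\int e^{-\|Y-X\beta\|_2^2/2}d\Pi(\beta)$. $C_\pi=\sum_{s=0}^p9^s\binom ps^{1/2}\sqrt{\pi_p(s)}$. For $S\subset\{1,\dots,p\}$ let $G_S$ be the probability measure on $\mathbb R^S$ with density $\prod_{i\in S}g(\beta_i)$. For $\beta\in\mathbb R^p$ with $S=S_\beta$, $s=|S|$, \[ D_\beta=\frac{\binom ps}{\pi_p(s)}\exp\Big(\mathrm{KL}\big(G_S(\cdot-\beta_S),G_S\big)+\tfrac12\int\|Xb_S\|_2^2\,dG_S(b_S)\Big),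 \] where $G_S(\cdot-\beta_S)$ is $G_S$ shifted by $\beta_S$, $\mathrm{KL}$ is the Kullback–Leibler divergence, and $Xb_S$ denotes $X$ applied to the vector in $\mathbb R^p$ equal to $b_S$ on $S$ and $0$ off $S$. *)

theory Defs
  imports "HOL-Probability.Probability"
begin

text \<open>Vectors in R^p are functions nat => real, only coordinates j < p are used.
  The design matrix X is nat => nat => real, only entries X i j with i < n, j < p are used.\<close>

definition matvec :: "nat \<Rightarrow> (nat \<Rightarrow> nat \<Rightarrow> real) \<Rightarrow> (nat \<Rightarrow> real) \<Rightarrow> nat \<Rightarrow> real" where
  "matvec p X v = (\<lambda>i. \<Sum>j<p. X i j * v j)"

definition vnorm :: "nat \<Rightarrow> (nat \<Rightarrow> real) \<Rightarrow> real" where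
  "vnorm n w = sqrt (\<Sum>i<n. (w i)\<^sup>2)"

definition supp :: "nat \<Rightarrow> (nat \<Rightarrow> real) \<Rightarrow> nat set" where
  "supp p \<beta> = {i. i < p \<and> \<beta> i \<noteq> 0}"

definition zext :: "nat set \<Rightarrow> (nat \<Rightarrow> real) \<Rightarrow> nat \<Rightarrow> real" where
  "zext S b = (\<lambda>j. if j \<in> S then b j else 0)"

definition subset_pmf :: "nat \<Rightarrow> nat pmf \<Rightarrow> nat set pmf" where
  "subset_pmf p \<pi> = bind_pmf \<pi> (\<lambda>s. pmf_of_set {S. S \<subseteq> {..<p} \<and> card S = s})"

definition G_S :: "(real \<Rightarrow> real) \<Rightarrow> nat set \<Rightarrow> (nat \<Rightarrow> real) measure" where
  "G_S g S = PiM S (\<lambda>_. density lborel (\<lambda>x. ennreal (g x)))"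

definition prior :: "nat \<Rightarrow> nat pmf \<Rightarrow> (real \<Rightarrow> real) \<Rightarrow> (nat \<Rightarrow> real) measure" where
  "prior p \<pi> g = Giry_Monad.bind (measure_pmf (subset_pmf p \<pi>))
      (\<lambda>S. distr (G_S g S) (PiM {..<p} (\<lambda>_. borel)) (\<lambda>b. restrict (zext S b) {..<p}))"

definition lik :: "nat \<Rightarrow> nat \<Rightarrow> (nat \<Rightarrow> nat \<Rightarrow> real) \<Rightarrow> (nat \<Rightarrow> real) \<Rightarrow> (nat \<Rightarrow> real) \<Rightarrow> real" where
  "lik n p X Y \<beta> = exp (- (vnorm n (\<lambda>i. Y i - matvec p X \<beta> i))\<^sup>2 / 2)"

definition posterior :: "nat \<Rightarrow> nat \<Rightarrow> (nat \<Rightarrow> nat \<Rightarrow> real) \<Rightarrow> (nat \<Rightarrow> real) measure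
     \<Rightarrow> (nat \<Rightarrow> real) \<Rightarrow> (nat \<Rightarrow> real) set \<Rightarrow> real" where
  "posterior n p X PiM0 Y B =
     (\<integral>\<beta>. indicator B \<beta> * lik n p X Y \<beta> \<partial>PiM0) / (\<integral>\<beta>. lik n p X Y \<beta> \<partial>PiM0)"

definition data_law :: "nat \<Rightarrow> nat \<Rightarrow> (nat \<Rightarrow> nat \<Rightarrow> real) \<Rightarrow> (nat \<Rightarrow> real) \<Rightarrow> (nat \<Rightarrow> real) measure" where
  "data_law n p X \<beta>0 = PiM {..<n} (\<lambda>i. density lborel (\<lambda>y. ennreal (normal_density (matvec p X \<beta>0 i) 1 y)))"

definition KL :: "'a measure \<Rightarrow> 'a measure \<Rightarrow> ereal" where
  "KL P Q = (if absolutely_continuous Q P \<and> integrable P (entropy_density (exp 1) Q P)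
             then ereal (KL_divergence (exp 1) Q P) else \<infinity>)"

definition C_pi :: "nat \<Rightarrow> nat pmf \<Rightarrow> real" where
  "C_pi p \<pi> = (\<Sum>s\<le>p. 9 ^ s * sqrt (real (p choose s)) * sqrt (pmf \<pi> s))"

definition D_beta :: "nat \<Rightarrow> nat pmf \<Rightarrow> (real \<Rightarrow> real) \<Rightarrow> (nat \<Rightarrow> nat \<Rightarrow> real) \<Rightarrow> nat
     \<Rightarrow> (nat \<Rightarrow> real) \<Rightarrow> ereal" where
  "D_beta n \<pi> g X p \<beta> =
    (let S = supp p \<beta>; s = card S; G = G_S g S;
         K = KL (distr G (PiM S (\<lambda>_. borel)) (\<lambda>b. restrict (\<lambda>i. b i + \<beta> i) S)) G;
         M = (\<integral>\<^sup>+ b. ennreal ((vnorm n (matvec p X (zext S b)))\<^sup>2) \<partial>G)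
     in if pmf \<pi> s = 0 \<or> K = \<infinity> \<or> M = \<infinity> then \<infinity>
        else ereal (real (p choose s) / pmf \<pi> s * exp (real_of_ereal K + enn2real M / 2)))"

definition rate_set :: "nat \<Rightarrow> nat \<Rightarrow> nat pmf \<Rightarrow> (real \<Rightarrow> real) \<Rightarrow> (nat \<Rightarrow> nat \<Rightarrow> real)
     \<Rightarrow> (nat \<Rightarrow> real) \<Rightarrow> (nat \<Rightarrow> real) \<Rightarrow> real \<Rightarrow> (nat \<Rightarrow> real) set" where
  "rate_set n p \<pi> g X \<beta>0 \<beta>s r =
    (let D = D_beta n \<pi> g X p \<beta>s in
     if D = \<infinity> then {}
     else {\<beta>. vnorm n (matvec p X (\<lambda>j. \<beta> j - \<beta>0 j)) >
              7 * vnorm n (matvec p X (\<lambda>j. \<beta>s j - \<beta>0 j))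
              + 4 * sqrt (ln ((C_pi p \<pi>)\<^sup>2 * real_of_ereal D)) + 8 * sqrt r})"

end

theory Submission
  imports Defs
begin

text \<open>Write \<open>L\<close> for the likelihood and \<open>t\<close> for the excess radius
  \<open>4 sqrt (log (C\<^sub>\<pi>\<^sup>2 D)) + 8 sqrt r\<close>. The posterior mass of the event is a ratio \<open>N / Z\<close> of
  prior integrals with \<open>N \<le> Z\<close>. The evidence satisfies \<open>Z \<ge> L(\<beta>\<^sup>*) / D\<^sub>\<beta>\<^sub>*\<close>: restrict the prior
  to the support \<open>S\<close> of \<open>\<beta>\<^sup>*\<close> and apply the Gibbs variational inequality to the slab shifted by
  \<open>\<beta>\<^sup>*\<close>; this produces the KL term and the second moment in \<open>D\<close>. On the event, for every
  support \<open>S\<close> the Gaussian likelihood ratio \<open>L(\<beta>) / L(\<beta>\<^sup>*)\<close> is at most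
  \<open>exp (12/13 |P\<^sub>S \<epsilon>|\<^sup>2 - t\<^sup>2/16)\<close>, where \<open>P\<^sub>S\<close> projects the noise onto the span of \<open>X\<beta>\<^sup>*\<close> and the
  columns \<open>X\<^sub>j\<close>, \<open>j \<in> S\<close>, a space of dimension at most \<open>|S| + 1\<close>. Hence the posterior mass is at most
  \<open>min (1, D \<Sigma>\<^sub>S \<Pi>(S) exp (\<dots>)) \<le> \<Sigma>\<^sub>S sqrt (D \<Pi>(S)) exp (6/13 |P\<^sub>S \<epsilon>|\<^sup>2 - t\<^sup>2/32)\<close>, and the
  chi-square moments \<open>E exp (6/13 \<chi>\<^sup>2\<^sub>k) = 13\<^sup>k\<^sup>/\<^sup>2\<close> turn this into \<open>4 e\<^sup>-\<^sup>r\<close>.\<close>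

section \<open>Euclidean geometry of coordinate vectors\<close>

definition dot :: "nat \<Rightarrow> (nat \<Rightarrow> real) \<Rightarrow> (nat \<Rightarrow> real) \<Rightarrow> real" where
  "dot n u v = (\<Sum>i<n. u i * v i)"

lemma dot_commute: "dot n u v = dot n v u"
  by (simp add: dot_def mult.commute)

lemma dot_self_nonneg: "0 \<le> dot n v v"
  by (simp add: dot_def sum_nonneg)

lemma dot_self_eq_0_imp: "dot n v v = 0 \<Longrightarrow> i < n \<Longrightarrow> v i = 0"
  unfolding dot_def by (subst (asm) sum_nonneg_eq_0_iff) auto

lemma dot_add_left: "dot n (\<lambda>i. a i + c i) v = dot n a v + dot n c v"
  by (simp add: dot_def distrib_right sum.distrib)

lemma dot_scale_left: "dot n (\<lambda>i. c * a i) v = c * dot n a v"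
  by (simp add: dot_def sum_distrib_left mult_ac)

lemma dot_diff_right: "dot n u (\<lambda>i. v i - w i) = dot n u v - dot n u w"
  by (simp add: dot_def right_diff_distrib sum_subtractf)

lemma dot_divide_right: "dot n u (\<lambda>i. v i / c) = dot n u v / c"
  by (simp add: dot_def sum_divide_distrib)

lemma dot_sum_right: "dot n u (\<lambda>i. \<Sum>l<k. c l * e l i) = (\<Sum>l<k. c l * dot n u (e l))"
  unfolding dot_def sum_distrib_left by (subst sum.swap) (simp add: mult_ac)

lemma dot_diff_self:
  "dot n (\<lambda>i. u i - z i) (\<lambda>i. u i - z i) = dot n u u - 2 * dot n u z + dot n z z"
  unfolding dot_def
  by (simp add: sum_subtractf sum.distrib sum_distrib_left algebra_simps power2_eq_square)

lemma abs_dot_le: "\<bar>dot n u z\<bar> \<le> (dot n u u + dot n z z) / 2"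
proof -
  have "\<bar>u i * z i\<bar> \<le> (u i * u i + z i * z i) / 2" for i
    using zero_le_power2[of "\<bar>u i\<bar> - \<bar>z i\<bar>"] by (simp add: power2_eq_square abs_mult algebra_simps)
  then have "\<bar>dot n u z\<bar> \<le> (\<Sum>i<n. (u i * u i + z i * z i) / 2)"
    unfolding dot_def by (intro order_trans[OF sum_abs sum_mono])
  then show ?thesis
    by (simp add: dot_def sum_divide_distrib[symmetric] sum.distrib)
qed

lemma vnorm_eq_L2_set: "vnorm n w = L2_set w {..<n}"
  unfolding vnorm_def L2_set_def ..

lemma vnorm_eq_sqrt_dot: "vnorm n w = sqrt (dot n w w)"
  by (simp add: vnorm_def dot_def power2_eq_square)

lemma vnorm_nonneg: "0 \<le> vnorm n w"
  by (simp add: vnorm_eq_L2_set)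

lemma vnorm_sq: "(vnorm n w)\<^sup>2 = dot n w w"
  by (simp add: vnorm_eq_sqrt_dot dot_self_nonneg)

lemma vnorm_add_le: "vnorm n (\<lambda>i. a i + c i) \<le> vnorm n a + vnorm n c"
  unfolding vnorm_eq_L2_set by (rule L2_set_triangle_ineq)

lemma vnorm_minus_commute: "vnorm n (\<lambda>i. a i - c i) = vnorm n (\<lambda>i. c i - a i)"
  by (simp add: vnorm_def power2_commute)

lemma dot_le_vnorm_mult: "dot n u v \<le> vnorm n u * vnorm n v"
proof -
  have "dot n u v \<le> (\<Sum>i<n. \<bar>u i\<bar> * \<bar>v i\<bar>)"
    unfolding dot_def by (intro sum_mono) (simp add: abs_mult[symmetric])
  also have "\<dots> \<le> vnorm n u * vnorm n v"
    unfolding vnorm_eq_L2_set by (rule L2_set_mult_ineq)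
  finally show ?thesis .
qed

section \<open>Orthonormal systems\<close>

definition orthonormal :: "nat \<Rightarrow> nat \<Rightarrow> (nat \<Rightarrow> nat \<Rightarrow> real) \<Rightarrow> bool" where
  "orthonormal n k e \<longleftrightarrow> (\<forall>l<k. \<forall>l'<k. dot n (e l) (e l') = (if l = l' then 1 else 0))"

text \<open>For orthonormal \<open>e\<close> this says that \<open>v\<close> lies in the span of \<open>e 0, \<dots>, e (k - 1)\<close>.\<close>

definition spanned_by :: "nat \<Rightarrow> nat \<Rightarrow> (nat \<Rightarrow> nat \<Rightarrow> real) \<Rightarrow> (nat \<Rightarrow> real) \<Rightarrow> bool" where
  "spanned_by n k e v \<longleftrightarrow> (\<forall>i<n. v i = (\<Sum>l<k. dot n v (e l) * e l i))"

definition proj_norm_sq :: "nat \<Rightarrow> nat \<Rightarrow> (nat \<Rightarrow> nat \<Rightarrow> real) \<Rightarrow> (nat \<Rightarrow> real) \<Rightarrow> real" where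
  "proj_norm_sq n k e u = (\<Sum>l<k. (dot n (e l) u)\<^sup>2)"

lemma proj_norm_sq_nonneg: "0 \<le> proj_norm_sq n k e u"
  by (simp add: proj_norm_sq_def sum_nonneg)

lemma dot_spanned_by:
  assumes "spanned_by n k e v"
  shows "dot n u v = (\<Sum>l<k. dot n v (e l) * dot n u (e l))"
proof -
  have "dot n u v = dot n u (\<lambda>i. \<Sum>l<k. dot n v (e l) * e l i)"
    using assms unfolding dot_def spanned_by_def by (intro sum.cong) auto
  then show ?thesis by (simp add: dot_sum_right)
qed

lemma spanned_by_add: "spanned_by n k e v \<Longrightarrow> spanned_by n k e w \<Longrightarrow> spanned_by n k e (\<lambda>i. v i + w i)"
  by (simp add: spanned_by_def dot_add_left distrib_right sum.distrib)

lemma spanned_by_scale: "spanned_by n k e v \<Longrightarrow> spanned_by n k e (\<lambda>i. c * v i)"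
  by (simp add: spanned_by_def dot_scale_left sum_distrib_left mult_ac)

lemma spanned_by_sum:
  assumes "finite J" "\<And>j. j \<in> J \<Longrightarrow> spanned_by n k e (f j)"
  shows "spanned_by n k e (\<lambda>i. \<Sum>j\<in>J. c j * f j i)"
  using assms
proof (induction J rule: finite_induct)
  case empty
  then show ?case by (simp add: spanned_by_def dot_def)
next
  case (insert j J)
  then show ?case by (simp add: spanned_by_add spanned_by_scale)
qed

lemma spanned_by_extend:
  "spanned_by n k e v \<Longrightarrow> dot n v x = 0 \<Longrightarrow> spanned_by n (Suc k) (e(k := x)) v"
  by (simp add: spanned_by_def)

lemma dot_le_vnorm_mult_proj:
  assumes "spanned_by n k e v"
  shows "dot n u v \<le> vnorm n v * sqrt (proj_norm_sq n k e u)"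
proof -
  have "dot n u v = (\<Sum>l<k. dot n v (e l) * dot n u (e l))"
    using assms by (rule dot_spanned_by)
  also have "\<dots> \<le> L2_set (\<lambda>l. dot n v (e l)) {..<k} * L2_set (\<lambda>l. dot n u (e l)) {..<k}"
    by (intro order_trans[OF _ L2_set_mult_ineq] sum_mono) (simp add: abs_mult[symmetric])
  also have "L2_set (\<lambda>l. dot n v (e l)) {..<k} = vnorm n v"
    using dot_spanned_by[OF assms, of v] by (simp add: L2_set_def vnorm_eq_sqrt_dot power2_eq_square)
  also have "L2_set (\<lambda>l. dot n u (e l)) {..<k} = sqrt (proj_norm_sq n k e u)"
    by (simp add: L2_set_def proj_norm_sq_def dot_commute)
  finally show ?thesis .
qed

lemma sum_mult_dot_orthonormal:
  assumes "orthonormal n k e" "l < k"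
  shows "(\<Sum>m<k. c m * dot n (e l) (e m)) = c l"
proof -
  have "(\<Sum>m<k. c m * dot n (e l) (e m)) = (\<Sum>m<k. if m = l then c l else 0)"
    using assms unfolding orthonormal_def by (intro sum.cong) auto
  then show ?thesis using assms(2) by simp
qed

lemma dot_gram_schmidt_residual:
  assumes "orthonormal n k e" "l < k"
  shows "dot n (e l) (\<lambda>i. w i - (\<Sum>m<k. dot n w (e m) * e m i)) = 0"
  using sum_mult_dot_orthonormal[OF assms, of "\<lambda>m. dot n w (e m)"]
  by (simp add: dot_diff_right dot_sum_right dot_commute[of n "e l" w])

lemma sum_squares_orthonormal_combination:
  assumes "orthonormal n k e"
  shows "(\<Sum>i<n. (\<Sum>l<k. z l * e l i)\<^sup>2) = (\<Sum>l<k. (z l)\<^sup>2)"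
proof -
  define v where "v = (\<lambda>i. \<Sum>l<k. z l * e l i)"
  have "dot n v (e l) = z l" if "l < k" for l
    unfolding dot_commute[of n v] unfolding v_def dot_sum_right by (rule sum_mult_dot_orthonormal[OF assms that])
  then have "dot n v v = (\<Sum>l<k. z l * z l)"
    by (subst (2) v_def) (simp add: dot_sum_right)
  then show ?thesis by (simp add: v_def dot_def power2_eq_square)
qed

lemma orthonormal_extend:
  assumes e: "orthonormal n k e" and x: "dot n x x = 1" "\<And>l. l < k \<Longrightarrow> dot n x (e l) = 0"
  shows "orthonormal n (Suc k) (e(k := x))"
  unfolding orthonormal_def
proof (intro allI impI)
  fix l l' assume "l < Suc k" "l' < Suc k"
  moreover have "dot n (e l) x = 0" if "l < k" for l
    using x(2)[OF that] by (simp add: dot_commute)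
  ultimately consider "l = k" "l' = k" | "l = k" "l' < k" | "l < k" "l' = k" | "l < k" "l' < k"
    by linarith
  then show "dot n ((e(k := x)) l) ((e(k := x)) l') = (if l = l' then 1 else 0)"
    by cases (use e x \<open>\<And>l. l < k \<Longrightarrow> dot n (e l) x = 0\<close> in \<open>simp_all add: orthonormal_def\<close>)
qed

lemma gram_schmidt_step:
  assumes e: "orthonormal n k e"
  obtains "spanned_by n k e w"
  | e' where "orthonormal n (Suc k) e'" "spanned_by n (Suc k) e' w"
      "\<And>v. spanned_by n k e v \<Longrightarrow> spanned_by n (Suc k) e' v"
proof -
  define r where "r = (\<lambda>i. w i - (\<Sum>l<k. dot n w (e l) * e l i))"
  have r_orth: "dot n (e l) r = 0" if "l < k" for l
    unfolding r_def using e that by (rule dot_gram_schmidt_residual)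
  show ?thesis
  proof (cases "dot n r r = 0")
    case True
    then have "spanned_by n k e w"
      unfolding spanned_by_def using dot_self_eq_0_imp[of n r] by (auto simp: r_def)
    then show ?thesis by (rule that(1))
  next
    case False
    define c where "c = sqrt (dot n r r)"
    have c: "0 < c" "c * c = dot n r r"
      using False dot_self_nonneg[of n r] by (auto simp: c_def)
    define e' where "e' = e(k := (\<lambda>i. r i / c))"
    have r_unit: "dot n (\<lambda>i. r i / c) (\<lambda>i. r i / c) = 1"
      using c by (simp add: dot_divide_right dot_commute[of n "\<lambda>i. r i / c" r] flip: c(2))
    have r_orth': "dot n (\<lambda>i. r i / c) (e l) = 0" if "l < k" for l
      using r_orth[OF that] by (simp add: dot_commute[of n _ "e l"] dot_divide_right)
    have "orthonormal n (Suc k) e'"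
      unfolding e'_def using e r_unit r_orth' by (rule orthonormal_extend)
    moreover have "spanned_by n (Suc k) e' w"
    proof -
      have "(\<Sum>l<k. dot n w (e l) * dot n r (e l)) = 0"
        using r_orth by (intro sum.neutral) (simp add: dot_commute[of n r "e _"])
      then have "dot n r r = dot n r w"
        by (subst (2) r_def) (simp add: dot_diff_right dot_sum_right)
      then have "dot n w (\<lambda>i. r i / c) * (r i / c) = r i" for i
        using c False by (simp add: dot_divide_right dot_commute[of n w r] field_simps)
      then show ?thesis unfolding spanned_by_def by (simp add: e'_def r_def)
    qed
    moreover have "spanned_by n (Suc k) e' v" if "spanned_by n k e v" for v
    proof -
      have "dot n r v = 0"
        using dot_spanned_by[OF that, of r] r_orth by (simp add: dot_commute[of n r "e _"])
      then show ?thesis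
        unfolding e'_def using that
        by (intro spanned_by_extend) (auto simp: dot_divide_right dot_commute[of n v r])
    qed
    ultimately show ?thesis by (rule that(2))
  qed
qed

lemma exists_orthonormal_spanning:
  assumes "finite V"
  shows "\<exists>k e. k \<le> card V \<and> orthonormal n k e \<and> (\<forall>v\<in>V. spanned_by n k e v)"
  using assms
proof (induction V rule: finite_induct)
  case empty
  show ?case by (rule exI[of _ 0]) (auto simp: orthonormal_def)
next
  case (insert w V)
  then obtain k e where k: "k \<le> card V" and e: "orthonormal n k e" and span: "\<forall>v\<in>V. spanned_by n k e v"
    by blast
  from e show ?case
  proof (cases rule: gram_schmidt_step[where w=w])
    case 1
    then show ?thesis using k e span insert by (intro exI[of _ k] exI[of _ e]) auto
  next
    case (2 e')
    then show ?thesis using k span insert by (intro exI[of _ "Suc k"] exI[of _ e']) auto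
  qed
qed

section \<open>Gaussian exponential moments\<close>

abbreviation unit_normal :: "real \<Rightarrow> real measure" where
  "unit_normal m \<equiv> density lborel (\<lambda>y. ennreal (normal_density m 1 y))"

lemma prob_space_unit_normal: "prob_space (unit_normal m)"
  by (rule prob_space_normal_density) simp

lemma nn_integral_exp_linear_unit_normal:
  "(\<integral>\<^sup>+ y. ennreal (exp (a * (y - m))) \<partial>unit_normal m) = ennreal (exp (a\<^sup>2 / 2))"
proof -
  have shift: "normal_density m 1 y * exp (a * (y - m)) = exp (a\<^sup>2 / 2) * normal_density (m + a) 1 y" for y
    by (simp add: normal_density_def field_simps exp_add[symmetric] power2_eq_square)
  have "(\<integral>\<^sup>+ y. ennreal (exp (a * (y - m))) \<partial>unit_normal m)
      = (\<integral>\<^sup>+ y. ennreal (exp (a\<^sup>2 / 2)) * ennreal (normal_density (m + a) 1 y) \<partial>lborel)"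
    by (subst nn_integral_density) (auto simp: ennreal_mult'[symmetric] shift intro!: nn_integral_cong)
  also have "\<dots> = ennreal (exp (a\<^sup>2 / 2))"
    using prob_space.emeasure_space_1[OF prob_space_unit_normal[of "m + a"]]
    by (subst nn_integral_cmult) (simp_all add: emeasure_density)
  finally show ?thesis .
qed

lemma nn_integral_exp_square_unit_normal:
  assumes "0 \<le> \<mu>" "\<mu> < 1 / 2"
  shows "(\<integral>\<^sup>+ z. ennreal (exp (\<mu> * z\<^sup>2)) \<partial>unit_normal 0) = ennreal (1 / sqrt (1 - 2 * \<mu>))"
proof -
  define \<sigma> where "\<sigma> = 1 / sqrt (1 - 2 * \<mu>)"
  have pos: "0 < 1 - 2 * \<mu>" using assms by simp
  have rescale: "normal_density 0 1 z * exp (\<mu> * z\<^sup>2) = \<sigma> * normal_density 0 \<sigma> z" for z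
  proof -
    have "\<sigma>\<^sup>2 = 1 / (1 - 2 * \<mu>)" using pos by (simp add: \<sigma>_def power_divide)
    then show ?thesis
      using pos unfolding normal_density_def
      by (simp add: \<sigma>_def exp_add[symmetric] real_sqrt_divide real_sqrt_mult field_simps)
  qed
  have "(\<integral>\<^sup>+ z. ennreal (exp (\<mu> * z\<^sup>2)) \<partial>unit_normal 0)
      = (\<integral>\<^sup>+ z. ennreal \<sigma> * ennreal (normal_density 0 \<sigma> z) \<partial>lborel)"
    using pos by (subst nn_integral_density)
      (auto simp: ennreal_mult'[symmetric] rescale \<sigma>_def intro!: nn_integral_cong)
  also have "\<dots> = ennreal \<sigma>"
    using pos by (subst nn_integral_cmult) (auto simp: \<sigma>_def nn_integral_eq_integral integral_normal_density)
  finally show ?thesis unfolding \<sigma>_def .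
qed

lemma product_sigma_finite_unit_normal: "product_sigma_finite (\<lambda>i. unit_normal (m i))"
  unfolding product_sigma_finite_def
  by (auto intro!: prob_space_imp_sigma_finite prob_space_unit_normal)

lemma nn_integral_exp_linear_PiM_unit_normal:
  fixes w m :: "nat \<Rightarrow> real"
  shows "(\<integral>\<^sup>+Y. ennreal (exp (c * (\<Sum>i<n. w i * (Y i - m i)))) \<partial>PiM {..<n} (\<lambda>i. unit_normal (m i)))
     = ennreal (exp (c\<^sup>2 * (\<Sum>i<n. (w i)\<^sup>2) / 2))"
proof -
  interpret product_sigma_finite "\<lambda>i. unit_normal (m i)"
    by (rule product_sigma_finite_unit_normal)
  have "(\<integral>\<^sup>+Y. ennreal (exp (c * (\<Sum>i<n. w i * (Y i - m i)))) \<partial>PiM {..<n} (\<lambda>i. unit_normal (m i)))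
      = (\<integral>\<^sup>+Y. (\<Prod>i<n. ennreal (exp (c * w i * (Y i - m i)))) \<partial>PiM {..<n} (\<lambda>i. unit_normal (m i)))"
  proof (intro nn_integral_cong)
    fix Y :: "nat \<Rightarrow> real"
    have "exp (c * (\<Sum>i<n. w i * (Y i - m i))) = (\<Prod>i<n. exp (c * w i * (Y i - m i)))"
      unfolding sum_distrib_left by (subst exp_sum) (auto simp: mult.assoc)
    then show "ennreal (exp (c * (\<Sum>i<n. w i * (Y i - m i)))) = (\<Prod>i<n. ennreal (exp (c * w i * (Y i - m i))))"
      by (simp add: prod_ennreal)
  qed
  also have "\<dots> = (\<Prod>i<n. \<integral>\<^sup>+y. ennreal (exp (c * w i * (y - m i))) \<partial>unit_normal (m i))"
    by (rule product_nn_integral_prod) auto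
  also have "\<dots> = (\<Prod>i<n. ennreal (exp ((c * w i)\<^sup>2 / 2)))"
    by (simp add: nn_integral_exp_linear_unit_normal)
  also have "\<dots> = ennreal (exp (c\<^sup>2 * (\<Sum>i<n. (w i)\<^sup>2) / 2))"
    by (simp add: prod_ennreal exp_sum[symmetric] sum_divide_distrib sum_distrib_left power_mult_distrib)
  finally show ?thesis .
qed

lemma nn_integral_exp_sum_squares_PiM_unit_normal:
  assumes "0 \<le> \<mu>" "\<mu> < 1 / 2"
  shows "(\<integral>\<^sup>+z. ennreal (exp (\<mu> * (\<Sum>l<k. (z l)\<^sup>2))) \<partial>PiM {..<k} (\<lambda>_. unit_normal 0))
     = ennreal ((1 / sqrt (1 - 2 * \<mu>)) ^ k)"
proof -
  interpret product_sigma_finite "\<lambda>_. unit_normal 0"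
    using product_sigma_finite_unit_normal[of "\<lambda>_. 0"] by simp
  have "(\<integral>\<^sup>+z. ennreal (exp (\<mu> * (\<Sum>l<k. (z l)\<^sup>2))) \<partial>PiM {..<k} (\<lambda>_. unit_normal 0))
      = (\<integral>\<^sup>+z. (\<Prod>l<k. ennreal (exp (\<mu> * (z l)\<^sup>2))) \<partial>PiM {..<k} (\<lambda>_. unit_normal 0))"
    by (intro nn_integral_cong) (simp add: sum_distrib_left exp_sum prod_ennreal)
  also have "\<dots> = (\<Prod>l<k. \<integral>\<^sup>+y. ennreal (exp (\<mu> * y\<^sup>2)) \<partial>unit_normal 0)"
    by (rule product_nn_integral_prod) auto
  also have "\<dots> = ennreal ((1 / sqrt (1 - 2 * \<mu>)) ^ k)"
    using assms by (simp add: nn_integral_exp_square_unit_normal prod_ennreal ennreal_power)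
  finally show ?thesis .
qed

text \<open>Writing \<open>exp (\<mu> |q|\<^sup>2)\<close> as the moment generating function
  of an auxiliary standard Gaussian \<open>z \<in> \<real>\<^sup>k\<close> at \<open>sqrt (2 \<mu>) q\<close> and swapping the integrals,
  \<open>\<langle>z, q(Y)\<rangle>\<close> becomes a linear functional of \<open>Y\<close> with variance \<open>|z|\<^sup>2\<close> by orthonormality.\<close>

lemma nn_integral_exp_proj_norm_sq:
  assumes e: "orthonormal n k e" and \<mu>: "0 \<le> \<mu>" "\<mu> < 1 / 2"
  shows "(\<integral>\<^sup>+Y. ennreal (exp (\<mu> * proj_norm_sq n k e (\<lambda>i. Y i - m i))) \<partial>PiM {..<n} (\<lambda>i. unit_normal (m i)))
     = ennreal ((1 / sqrt (1 - 2 * \<mu>)) ^ k)"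
proof -
  define c where "c = sqrt (2 * \<mu>)"
  have c2: "c\<^sup>2 = 2 * \<mu>" using \<mu> by (simp add: c_def)
  define N where "N = PiM {..<n} (\<lambda>i. unit_normal (m i))"
  define Z where "Z = PiM {..<k} (\<lambda>_::nat. unit_normal 0)"
  define q where "q = (\<lambda>l Y. dot n (e l) (\<lambda>i. Y i - m i))"
  define F where "F = (\<lambda>Y z. ennreal (exp (c * (\<Sum>l<k. z l * q l Y))))"
  interpret N: prob_space N
    unfolding N_def by (intro prob_space_PiM prob_space_unit_normal)
  interpret Z: prob_space Z
    unfolding Z_def by (intro prob_space_PiM prob_space_unit_normal)
  interpret pair_sigma_finite N Z ..
  have mgf_z: "ennreal (exp (\<mu> * proj_norm_sq n k e (\<lambda>i. Y i - m i))) = (\<integral>\<^sup>+z. F Y z \<partial>Z)" for Y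
    using nn_integral_exp_linear_PiM_unit_normal[where c=c and n=k and w="\<lambda>l. q l Y" and m="\<lambda>_. 0"] c2
    unfolding F_def Z_def q_def proj_norm_sq_def by (simp add: mult.commute)
  have F_measurable: "case_prod F \<in> borel_measurable (N \<Otimes>\<^sub>M Z)"
    unfolding F_def q_def dot_def N_def Z_def by measurable
  have mgf_Y: "(\<integral>\<^sup>+Y. F Y z \<partial>N) = ennreal (exp (\<mu> * (\<Sum>l<k. (z l)\<^sup>2)))" for z
  proof -
    define w where "w = (\<lambda>i. \<Sum>l<k. z l * e l i)"
    have "(\<Sum>l<k. z l * q l Y) = (\<Sum>i<n. w i * (Y i - m i))" for Y
      unfolding q_def dot_def w_def
      by (simp add: sum_distrib_left sum_distrib_right mult_ac) (rule sum.swap)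
    then have "(\<integral>\<^sup>+Y. F Y z \<partial>N) = ennreal (exp (c\<^sup>2 * (\<Sum>i<n. (w i)\<^sup>2) / 2))"
      unfolding F_def N_def by (simp add: nn_integral_exp_linear_PiM_unit_normal)
    also have "\<dots> = ennreal (exp (\<mu> * (\<Sum>l<k. (z l)\<^sup>2)))"
      unfolding w_def sum_squares_orthonormal_combination[OF e] c2 by simp
    finally show ?thesis .
  qed
  have "(\<integral>\<^sup>+Y. ennreal (exp (\<mu> * proj_norm_sq n k e (\<lambda>i. Y i - m i))) \<partial>N) = (\<integral>\<^sup>+Y. \<integral>\<^sup>+z. F Y z \<partial>Z \<partial>N)"
    by (simp add: mgf_z)
  also have "\<dots> = (\<integral>\<^sup>+z. \<integral>\<^sup>+Y. F Y z \<partial>N \<partial>Z)"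
    by (rule Fubini'[OF F_measurable, symmetric])
  also have "\<dots> = ennreal ((1 / sqrt (1 - 2 * \<mu>)) ^ k)"
    unfolding mgf_Y Z_def using nn_integral_exp_sum_squares_PiM_unit_normal[OF \<mu>] .
  finally show ?thesis unfolding N_def .
qed

section \<open>The spike-and-slab prior\<close>

lemma k_subsets_nonempty: "k \<le> p \<Longrightarrow> {S. S \<subseteq> {..<p::nat} \<and> card S = k} \<noteq> {}"
proof -
  assume "k \<le> p"
  then have "{..<k} \<in> {S. S \<subseteq> {..<p} \<and> card S = k}" by auto
  then show ?thesis by blast
qed

lemma finite_k_subsets: "finite {S. S \<subseteq> {..<p::nat} \<and> card S = k}"
  by (rule finite_subset[of _ "Pow {..<p}"]) auto

lemma card_k_subsets: "card {S. S \<subseteq> {..<p::nat} \<and> card S = k} = p choose k"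
  using n_subsets[of "{..<p}" k] by simp

lemma sum_Pow_lessThan_card:
  fixes f :: "nat \<Rightarrow> 'a::comm_semiring_1"
  shows "(\<Sum>S\<in>Pow {..<p}. f (card S)) = (\<Sum>s\<le>p. of_nat (p choose s) * f s)"
proof -
  have "Pow {..<p} = (\<Union>s\<le>p. {S. S \<subseteq> {..<p} \<and> card S = s})"
    using card_mono[of "{..<p}"] by auto
  then have "(\<Sum>S\<in>Pow {..<p}. f (card S)) = (\<Sum>s\<le>p. \<Sum>S\<in>{S. S \<subseteq> {..<p} \<and> card S = s}. f (card S))"
    by (simp only:) (rule sum.UNION_disjoint, auto simp: finite_k_subsets)
  also have "\<dots> = (\<Sum>s\<le>p. of_nat (p choose s) * f s)"
    by (intro sum.cong refl) (simp add: card_k_subsets)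
  finally show ?thesis .
qed

lemma sets_G_S: "sets (G_S g S) = sets (PiM S (\<lambda>_. borel))"
  unfolding G_S_def by (intro sets_PiM_cong) auto

lemma measurable_G_S_iff: "measurable (G_S g S) N = measurable (PiM S (\<lambda>_. borel)) N"
  by (rule measurable_cong_sets[OF sets_G_S refl])

lemma measurable_zext [measurable]: "(\<lambda>b. zext S b j) \<in> borel_measurable (PiM S (\<lambda>_. borel))"
  unfolding zext_def by (cases "j \<in> S") auto

lemma measurable_restrict_zext:
  "(\<lambda>b. restrict (zext S b) {..<p}) \<in> measurable (G_S g S) (PiM {..<p} (\<lambda>_. borel))"
  unfolding measurable_G_S_iff by measurable

lemma distr_uminus_density_even:
  fixes g :: "real \<Rightarrow> real"
  assumes "g \<in> borel_measurable lborel" "\<And>x. g (- x) = g x"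
  shows "distr (density lborel (\<lambda>x. ennreal (g x))) borel uminus = density lborel (\<lambda>x. ennreal (g x))"
proof -
  have "density (distr lborel borel uminus) (\<lambda>x. ennreal (g x))
      = distr (density lborel (\<lambda>x. ennreal (g (- x)))) borel uminus"
    using assms(1) by (intro density_distr) auto
  then show ?thesis by (simp add: lborel_distr_uminus assms(2))
qed

locale spike_and_slab =
  fixes p :: nat and \<pi> :: "nat pmf" and g :: "real \<Rightarrow> real"
  assumes set_pmf_\<pi>: "set_pmf \<pi> \<subseteq> {..p}"
    and g_measurable: "g \<in> borel_measurable lborel"
    and g_density: "(\<integral>\<^sup>+ x. ennreal (g x) \<partial>lborel) = 1"
    and g_even: "\<And>x. g (- x) = g x"
begin

lemma prob_space_slab: "prob_space (density lborel (\<lambda>x. ennreal (g x)))"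
  using g_measurable g_density by (intro prob_spaceI) (simp add: emeasure_density)

lemma prob_space_G_S: "prob_space (G_S g S)"
  unfolding G_S_def by (intro prob_space_PiM prob_space_slab)

lemma G_S_reflect:
  assumes "finite S"
  shows "distr (G_S g S) (PiM S (\<lambda>_. borel)) (\<lambda>b. restrict (\<lambda>i. - b i) S) = G_S g S"
proof -
  let ?G = "density lborel (\<lambda>x. ennreal (g x))"
  have "distr (G_S g S) (PiM S (\<lambda>_. borel)) (\<lambda>b. restrict (\<lambda>i. - b i) S)
      = distr (PiM S (\<lambda>_. ?G)) (PiM S (\<lambda>_. ?G)) (compose S uminus)"
    unfolding G_S_def compose_def by (intro distr_cong sets_PiM_cong) auto
  also have "\<dots> = PiM S (\<lambda>_. distr ?G ?G uminus)"
    using assms prob_space_slab by (intro distr_PiM_finite_prob_space') auto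
  also have "distr ?G ?G uminus = ?G"
    using distr_uminus_density_even[OF g_measurable g_even] by (simp cong: distr_cong)
  finally show ?thesis unfolding G_S_def .
qed

lemma set_pmf_subset_pmf: "set_pmf (subset_pmf p \<pi>) \<subseteq> Pow {..<p}"
proof
  fix S assume "S \<in> set_pmf (subset_pmf p \<pi>)"
  then obtain s where s: "s \<in> set_pmf \<pi>" and "S \<in> set_pmf (pmf_of_set {S. S \<subseteq> {..<p} \<and> card S = s})"
    unfolding subset_pmf_def by auto
  moreover have "s \<le> p" using s set_pmf_\<pi> by auto
  ultimately show "S \<in> Pow {..<p}"
    using set_pmf_of_set[OF k_subsets_nonempty finite_k_subsets] by auto
qed

lemma pmf_subset_pmf:
  assumes S: "S \<subseteq> {..<p}"
  shows "pmf (subset_pmf p \<pi>) S = pmf \<pi> (card S) / real (p choose card S)"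
proof -
  have "card S \<le> p" using card_mono[OF _ S] by auto
  have "pmf (subset_pmf p \<pi>) S = (\<integral>s. pmf (pmf_of_set {S. S \<subseteq> {..<p} \<and> card S = s}) S \<partial>measure_pmf \<pi>)"
    unfolding subset_pmf_def pmf_bind ..
  also have "\<dots> = (\<Sum>s\<in>{card S}. pmf (pmf_of_set {T. T \<subseteq> {..<p} \<and> card T = s}) S * pmf \<pi> s)"
  proof (rule integral_measure_pmf_real)
    fix s assume "s \<in> set_pmf \<pi>" "pmf (pmf_of_set {S. S \<subseteq> {..<p} \<and> card S = s}) S \<noteq> 0"
    with set_pmf_\<pi> show "s \<in> {card S}"
      by (auto simp: pmf_of_set[OF k_subsets_nonempty finite_k_subsets] split: split_indicator_asm)
  qed simp
  also have "\<dots> = pmf \<pi> (card S) / real (p choose card S)"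
    using S \<open>card S \<le> p\<close> by (simp add: pmf_of_set[OF k_subsets_nonempty finite_k_subsets] card_k_subsets)
  finally show ?thesis .
qed

lemma sets_prior: "sets (prior p \<pi> g) = sets (PiM {..<p} (\<lambda>_. borel))"
  unfolding prior_def by (rule sets_bind) auto

lemma measurable_prior_iff: "measurable (prior p \<pi> g) N = measurable (PiM {..<p} (\<lambda>_. borel)) N"
  by (rule measurable_cong_sets[OF sets_prior refl])

lemma nn_integral_prior:
  assumes f: "f \<in> borel_measurable (PiM {..<p} (\<lambda>_. borel))"
  shows "(\<integral>\<^sup>+\<beta>. f \<beta> \<partial>prior p \<pi> g)
       = (\<Sum>S\<in>Pow {..<p}. (\<integral>\<^sup>+b. f (restrict (zext S b) {..<p}) \<partial>G_S g S) * pmf (subset_pmf p \<pi>) S)"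
proof -
  have kernel: "(\<lambda>S. distr (G_S g S) (PiM {..<p} (\<lambda>_. borel)) (\<lambda>b. restrict (zext S b) {..<p}))
           \<in> measurable (measure_pmf (subset_pmf p \<pi>)) (subprob_algebra (PiM {..<p} (\<lambda>_. borel)))"
    using prob_space.prob_space_distr[OF prob_space_G_S measurable_restrict_zext]
    by (auto simp: space_subprob_algebra intro: prob_space_imp_subprob_space)
  have "(\<integral>\<^sup>+\<beta>. f \<beta> \<partial>prior p \<pi> g)
      = (\<integral>\<^sup>+S. \<integral>\<^sup>+b. f (restrict (zext S b) {..<p}) \<partial>G_S g S \<partial>measure_pmf (subset_pmf p \<pi>))"
    unfolding prior_def nn_integral_bind[OF f kernel]
    by (intro nn_integral_cong nn_integral_distr measurable_restrict_zext) (simp add: f)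
  also have "\<dots> = (\<Sum>S\<in>Pow {..<p}. (\<integral>\<^sup>+b. f (restrict (zext S b) {..<p}) \<partial>G_S g S) * pmf (subset_pmf p \<pi>) S)"
    using set_pmf_subset_pmf by (intro nn_integral_measure_pmf_support) auto
  finally show ?thesis .
qed

lemma nn_integral_prior_le_1:
  assumes "f \<in> borel_measurable (PiM {..<p} (\<lambda>_. borel))" "\<And>\<beta>. f \<beta> \<le> 1"
  shows "(\<integral>\<^sup>+\<beta>. f \<beta> \<partial>prior p \<pi> g) \<le> 1"
proof -
  have "(\<integral>\<^sup>+b. f (restrict (zext S b) {..<p}) \<partial>G_S g S) \<le> 1" for S
    using nn_integral_mono[of "G_S g S" _ "\<lambda>_. 1"] assms(2)
    by (simp add: prob_space.emeasure_space_1[OF prob_space_G_S])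
  then have "(\<integral>\<^sup>+\<beta>. f \<beta> \<partial>prior p \<pi> g) \<le> (\<Sum>S\<in>Pow {..<p}. 1 * ennreal (pmf (subset_pmf p \<pi>) S))"
    unfolding nn_integral_prior[OF assms(1)] by (intro sum_mono mult_right_mono) auto
  also have "\<dots> = (\<integral>\<^sup>+S. 1 \<partial>measure_pmf (subset_pmf p \<pi>))"
    using set_pmf_subset_pmf by (subst nn_integral_measure_pmf_support[of "Pow {..<p}"]) auto
  finally show ?thesis by (simp add: measure_pmf.emeasure_space_1)
qed

lemma C_pi_ge_1: "1 \<le> C_pi p \<pi>"
proof -
  have "1 = (\<Sum>s\<le>p. pmf \<pi> s)"
    using sum_pmf_eq_1[of "{..p}" \<pi>] set_pmf_\<pi> by simp
  also have "\<dots> \<le> C_pi p \<pi>"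
    unfolding C_pi_def
  proof (rule sum_mono)
    fix s assume "s \<in> {..p}"
    then have "1 \<le> sqrt (real (p choose s))"
      by (simp add: Suc_le_eq zero_less_binomial)
    then have "1 \<le> 9 ^ s * sqrt (real (p choose s))"
      using mult_mono[of 1 "9 ^ s" 1 "sqrt (real (p choose s))"] by simp
    moreover have "pmf \<pi> s \<le> sqrt (pmf \<pi> s)"
      using pmf_le_1[of \<pi> s] by (intro real_le_rsqrt) (simp add: power2_eq_square mult_left_le)
    ultimately show "pmf \<pi> s \<le> 9 ^ s * sqrt (real (p choose s)) * sqrt (pmf \<pi> s)"
      using mult_right_mono[of 1 _ "sqrt (pmf \<pi> s)"] by fastforce
  qed
  finally show ?thesis .
qed

lemma sum_sqrt_subset_pmf_le_C_pi:
  "(\<Sum>S\<in>Pow {..<p}. sqrt (pmf (subset_pmf p \<pi>) S) * sqrt 13 ^ card S) \<le> C_pi p \<pi>"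
proof -
  have "(\<Sum>S\<in>Pow {..<p}. sqrt (pmf (subset_pmf p \<pi>) S) * sqrt 13 ^ card S)
      = (\<Sum>S\<in>Pow {..<p}. sqrt (pmf \<pi> (card S) / real (p choose card S)) * sqrt 13 ^ card S)"
    by (intro sum.cong refl) (simp add: pmf_subset_pmf)
  also have "\<dots> = (\<Sum>s\<le>p. real (p choose s) * (sqrt (pmf \<pi> s / real (p choose s)) * sqrt 13 ^ s))"
    by (rule sum_Pow_lessThan_card)
  also have "\<dots> \<le> C_pi p \<pi>"
    unfolding C_pi_def
  proof (rule sum_mono)
    fix s assume "s \<in> {..p}"
    then have c: "1 \<le> real (p choose s)" by (simp add: Suc_le_eq zero_less_binomial)
    have "real (p choose s) * sqrt (pmf \<pi> s / real (p choose s))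
        = (real (p choose s) / sqrt (p choose s)) * sqrt (pmf \<pi> s)"
      by (simp add: real_sqrt_divide)
    also have "real (p choose s) / sqrt (p choose s) = sqrt (p choose s)"
      by (simp add: real_div_sqrt)
    finally have "real (p choose s) * sqrt (pmf \<pi> s / real (p choose s)) = sqrt (real (p choose s)) * sqrt (pmf \<pi> s)" .
    moreover have "sqrt 13 ^ s \<le> (9::real) ^ s"
      by (rule power_mono) (simp_all add: real_sqrt_le_iff[of 13 "9\<^sup>2", simplified])
    ultimately have "real (p choose s) * (sqrt (pmf \<pi> s / real (p choose s)) * sqrt 13 ^ s)
        \<le> (sqrt (real (p choose s)) * sqrt (pmf \<pi> s)) * 9 ^ s"
      by (simp add: mult.assoc[symmetric] mult_left_mono)
    then show "real (p choose s) * (sqrt (pmf \<pi> s / real (p choose s)) * sqrt 13 ^ s)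
        \<le> 9 ^ s * sqrt (real (p choose s)) * sqrt (pmf \<pi> s)"
      by (simp only: mult_ac)
  qed
  finally show ?thesis .
qed

end

section \<open>A change-of-measure lower bound\<close>

lemma exp_integral_le_nn_integral_exp:
  assumes "prob_space Q" and h: "integrable Q h"
  shows "ennreal (exp (\<integral>x. h x \<partial>Q)) \<le> (\<integral>\<^sup>+x. ennreal (exp (h x)) \<partial>Q)"
proof (cases "(\<integral>\<^sup>+x. ennreal (exp (h x)) \<partial>Q) = \<infinity>")
  case False
  interpret prob_space Q by fact
  define m where "m = (\<integral>x. h x \<partial>Q)"
  have exp_h: "integrable Q (\<lambda>x. exp (h x))"
    using False h by (intro integrableI_bounded) (auto simp: less_top)
  have "exp m * (1 + h x - m) \<le> exp (h x)" for x
    using mult_left_mono[OF exp_ge_add_one_self[of "h x - m"], of "exp m"]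
    by (simp add: exp_diff algebra_simps)
  then have "(\<integral>x. exp m * (1 + h x - m) \<partial>Q) \<le> (\<integral>x. exp (h x) \<partial>Q)"
    using h exp_h by (intro integral_mono) auto
  moreover have "(\<integral>x. exp m * (1 + h x - m) \<partial>Q) = exp m"
    using h prob_space by (simp add: m_def algebra_simps)
  ultimately show ?thesis
    using exp_h by (simp add: m_def nn_integral_eq_integral)
qed simp

text \<open>Note that \<open>KL_divergence b G Q\<close> is
  the divergence of \<open>Q\<close> from \<open>G\<close>.\<close>

lemma nn_integral_exp_ge_KL_divergence:
  assumes G: "prob_space G" and Q: "prob_space Q" and sets: "sets Q = sets G"
    and ac: "absolutely_continuous G Q"
    and ent: "integrable Q (entropy_density (exp 1) G Q)" and h: "integrable Q h"
  shows "ennreal (exp ((\<integral>x. h x \<partial>Q) - KL_divergence (exp 1) G Q)) \<le> (\<integral>\<^sup>+x. ennreal (exp (h x)) \<partial>G)"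
proof -
  interpret G: prob_space G by fact
  interpret Q: prob_space Q by fact
  define \<rho> where "\<rho> = RN_deriv G Q"
  have Q_density: "density G \<rho> = Q" unfolding \<rho>_def by (rule G.density_RN_deriv[OF ac sets])
  obtain D where D: "D \<in> borel_measurable G" "AE x in G. \<rho> x = ennreal (D x)"
      "AE x in Q. 0 < D x" "\<And>x. 0 \<le> D x"
    using G.real_RN_deriv[OF _ ac sets] Q.finite_measure_axioms unfolding \<rho>_def by metis
  have D_Q: "AE x in Q. \<rho> x = ennreal (D x)"
    by (rule absolutely_continuous_AE[OF sets ac D(2)])
  have h_measurable: "h \<in> borel_measurable G"
    using h measurable_cong_sets[OF sets refl] by auto
  have "(\<integral>\<^sup>+x. ennreal (exp (h x - entropy_density (exp 1) G Q x)) \<partial>Q)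
      = (\<integral>\<^sup>+x. ennreal (exp (h x) / D x) \<partial>Q)"
    using D(3) D_Q
    by (intro nn_integral_cong_AE, eventually_elim)
      (simp add: entropy_density_def \<rho>_def log_def exp_diff)
  also have "\<dots> = (\<integral>\<^sup>+x. \<rho> x * ennreal (exp (h x) / D x) \<partial>G)"
    unfolding Q_density[symmetric] using h_measurable D(1)
    by (intro nn_integral_density) (auto simp: \<rho>_def)
  also have "\<dots> \<le> (\<integral>\<^sup>+x. ennreal (exp (h x)) \<partial>G)"
  proof (intro nn_integral_mono_AE)
    show "AE x in G. \<rho> x * ennreal (exp (h x) / D x) \<le> ennreal (exp (h x))"
      using D(2)
    proof eventually_elim
      case (elim x)
      have "D x * (exp (h x) / D x) \<le> exp (h x)"
        using D(4)[of x] by (cases "D x = 0") auto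
      then show ?case using D(4)[of x] elim by (simp add: ennreal_mult'[symmetric])
    qed
  qed
  finally have "(\<integral>\<^sup>+x. ennreal (exp (h x - entropy_density (exp 1) G Q x)) \<partial>Q)
      \<le> (\<integral>\<^sup>+x. ennreal (exp (h x)) \<partial>G)" .
  moreover have "ennreal (exp ((\<integral>x. h x \<partial>Q) - KL_divergence (exp 1) G Q))
      \<le> (\<integral>\<^sup>+x. ennreal (exp (h x - entropy_density (exp 1) G Q x)) \<partial>Q)"
    using exp_integral_le_nn_integral_exp[OF Q, of "\<lambda>x. h x - entropy_density (exp 1) G Q x"] h ent
    by (simp add: KL_divergence_def)
  ultimately show ?thesis by (rule order_trans[rotated])
qed

section \<open>The Gaussian likelihood\<close>

lemma lik_eq_exp_dot:
  "lik n p X Y \<beta> = exp (- dot n (\<lambda>i. Y i - matvec p X \<beta> i) (\<lambda>i. Y i - matvec p X \<beta> i) / 2)"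
  unfolding lik_def vnorm_sq ..

lemma lik_pos: "0 < lik n p X Y \<beta>"
  unfolding lik_def by simp

lemma lik_le_1: "lik n p X Y \<beta> \<le> 1"
  unfolding lik_def by simp

lemma lik_matvec_self: "lik n p X (matvec p X \<beta>) \<beta> = 1"
  unfolding lik_eq_exp_dot by (simp add: dot_def)

lemma matvec_restrict_lessThan: "matvec p X (restrict v {..<p}) = matvec p X v"
  unfolding matvec_def by (intro ext sum.cong) auto

lemma matvec_diff: "matvec p X (\<lambda>j. \<beta> j - \<beta>' j) = (\<lambda>i. matvec p X \<beta> i - matvec p X \<beta>' i)"
  unfolding matvec_def by (simp add: right_diff_distrib sum_subtractf)

lemma matvec_zext_shift:
  "matvec p X (zext (supp p \<beta>) (restrict (\<lambda>i. b i + \<beta> i) (supp p \<beta>)))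
    = (\<lambda>i. matvec p X (zext (supp p \<beta>) b) i + matvec p X \<beta> i)"
  unfolding matvec_def zext_def supp_def
  by (intro ext) (auto simp: sum.distrib[symmetric] algebra_simps intro!: sum.cong)

lemma matvec_zext_uminus:
  "matvec p X (zext S (restrict (\<lambda>i. - b i) S)) = (\<lambda>i. - matvec p X (zext S b) i)"
  unfolding matvec_def zext_def by (intro ext) (auto simp: sum_negf[symmetric] intro!: sum.cong)

lemma matvec_zext_eq_sum:
  assumes "S \<subseteq> {..<p}"
  shows "matvec p X (restrict (zext S b) {..<p}) = (\<lambda>i. \<Sum>j\<in>S. b j * X i j)"
proof
  fix i
  have "matvec p X (restrict (zext S b) {..<p}) i = (\<Sum>j\<in>{..<p} \<inter> S. b j * X i j)"
    unfolding matvec_restrict_lessThan matvec_def zext_def sum.inter_restrict[OF finite_lessThan]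
    by (intro sum.cong) auto
  also have "{..<p} \<inter> S = S" using assms by auto
  finally show "matvec p X (restrict (zext S b) {..<p}) i = (\<Sum>j\<in>S. b j * X i j)" .
qed

lemma measurable_matvec_zext [measurable]:
  "(\<lambda>b. matvec p X (zext S b) i) \<in> borel_measurable (PiM S (\<lambda>_. borel))"
  unfolding matvec_def by measurable

lemma measurable_lik: "(\<lambda>\<beta>. lik n p X Y \<beta>) \<in> borel_measurable (PiM {..<p} (\<lambda>_. borel))"
  unfolding lik_eq_exp_dot dot_def matvec_def by measurable

context spike_and_slab
begin

lemma integral_dot_matvec_zext_eq_0:
  assumes "finite S"
  shows "(\<integral>b. dot n u (matvec p X (zext S b)) \<partial>G_S g S) = 0"
proof -
  define R where "R = (\<lambda>b::nat\<Rightarrow>real. restrict (\<lambda>i. - b i) S)"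
  have R: "R \<in> measurable (G_S g S) (PiM S (\<lambda>_. borel))"
    unfolding measurable_G_S_iff R_def by measurable
  have f: "(\<lambda>b. dot n u (matvec p X (zext S b))) \<in> borel_measurable (PiM S (\<lambda>_. borel))"
    unfolding dot_def by measurable
  have "(\<integral>b. dot n u (matvec p X (zext S b)) \<partial>G_S g S)
      = (\<integral>b. dot n u (matvec p X (zext S b)) \<partial>distr (G_S g S) (PiM S (\<lambda>_. borel)) R)"
    unfolding R_def G_S_reflect[OF assms] ..
  also have "\<dots> = (\<integral>b. - dot n u (matvec p X (zext S b)) \<partial>G_S g S)"
    unfolding integral_distr[OF R f] unfolding R_def matvec_zext_uminus by (simp add: dot_def sum_negf[symmetric])
  finally show ?thesis by simp
qed

lemma integrable_dot_matvec_zext: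
  assumes "(\<integral>\<^sup>+ b. ennreal ((vnorm n (matvec p X (zext S b)))\<^sup>2) \<partial>G_S g S) \<noteq> \<infinity>"
  shows "integrable (G_S g S) (\<lambda>b. dot n (matvec p X (zext S b)) (matvec p X (zext S b)))"
    and "integrable (G_S g S) (\<lambda>b. dot n u (matvec p X (zext S b)))"
    and "(\<integral>b. dot n (matvec p X (zext S b)) (matvec p X (zext S b)) \<partial>G_S g S)
      = enn2real (\<integral>\<^sup>+ b. ennreal ((vnorm n (matvec p X (zext S b)))\<^sup>2) \<partial>G_S g S)"
proof -
  interpret prob_space "G_S g S" by (rule prob_space_G_S)
  define z where "z b = matvec p X (zext S b)" for b
  have zz: "(\<lambda>b. dot n (z b) (z b)) \<in> borel_measurable (G_S g S)"
    unfolding measurable_G_S_iff z_def dot_def by measurable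
  show zz_int: "integrable (G_S g S) (\<lambda>b. dot n (z b) (z b))"
    using assms by (intro integrableI_nonneg[OF zz]) (auto simp: z_def vnorm_sq less_top dot_self_nonneg)
  show "(\<integral>b. dot n (z b) (z b) \<partial>G_S g S) = enn2real (\<integral>\<^sup>+ b. ennreal ((vnorm n (z b))\<^sup>2) \<partial>G_S g S)"
    unfolding vnorm_sq using zz by (rule integral_eq_nn_integral) (simp add: dot_self_nonneg)
  show "integrable (G_S g S) (\<lambda>b. dot n u (z b))"
  proof (rule Bochner_Integration.integrable_bound)
    show "integrable (G_S g S) (\<lambda>b. (dot n u u + dot n (z b) (z b)) / 2)" using zz_int by auto
    show "(\<lambda>b. dot n u (z b)) \<in> borel_measurable (G_S g S)"
      unfolding measurable_G_S_iff z_def dot_def by measurable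
    show "AE b in G_S g S. norm (dot n u (z b)) \<le> norm ((dot n u u + dot n (z b) (z b)) / 2)"
      using abs_dot_le dot_self_nonneg by (auto intro!: AE_I2 simp: add_nonneg_nonneg)
  qed
qed

text \<open>Under the slab shifted by \<open>\<beta>\<^sup>*\<close> the expected log-likelihood is \<open>log L(\<beta>\<^sup>*) - M / 2\<close>:
  the cross term vanishes by symmetry of \<open>g\<close>.\<close>

lemma log_lik_shifted_slab:
  fixes n :: nat and X :: "nat \<Rightarrow> nat \<Rightarrow> real" and Y \<beta>s :: "nat \<Rightarrow> real"
  defines "S \<equiv> supp p \<beta>s"
  defines "Q \<equiv> distr (G_S g S) (PiM S (\<lambda>_. borel)) (\<lambda>b. restrict (\<lambda>i. b i + \<beta>s i) S)"
  defines "M \<equiv> \<integral>\<^sup>+ b. ennreal ((vnorm n (matvec p X (zext S b)))\<^sup>2) \<partial>G_S g S"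
  assumes M_finite: "M \<noteq> \<infinity>"
  shows "integrable Q (\<lambda>b. ln (lik n p X Y (restrict (zext S b) {..<p})))"
    and "(\<integral>b. ln (lik n p X Y (restrict (zext S b) {..<p})) \<partial>Q) = ln (lik n p X Y \<beta>s) - enn2real M / 2"
proof -
  interpret G: prob_space "G_S g S" by (rule prob_space_G_S)
  have "finite S" unfolding S_def supp_def by auto
  define T where "T = (\<lambda>b::nat\<Rightarrow>real. restrict (\<lambda>i. b i + \<beta>s i) S)"
  have T: "T \<in> measurable (G_S g S) (PiM S (\<lambda>_. borel))"
    unfolding measurable_G_S_iff T_def by measurable
  define z where "z = (\<lambda>b. matvec p X (zext S b))"
  define u where "u = (\<lambda>i. Y i - matvec p X \<beta>s i)"
  define L where "L = (\<lambda>b. ln (lik n p X Y (restrict (zext S b) {..<p})))"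
  have L_eq: "L b = - dot n (\<lambda>i. Y i - z b i) (\<lambda>i. Y i - z b i) / 2" for b
    unfolding L_def lik_eq_exp_dot matvec_restrict_lessThan z_def by simp
  have L_measurable: "L \<in> borel_measurable (PiM S (\<lambda>_. borel))"
    unfolding L_eq[abs_def] dot_def z_def by measurable
  have L_T: "L (T b) = - dot n u u / 2 + dot n u (z b) - dot n (z b) (z b) / 2" for b
  proof -
    have "(\<lambda>i. Y i - z (T b) i) = (\<lambda>i. u i - z b i)"
      unfolding z_def T_def S_def matvec_zext_shift u_def by auto
    then have "L (T b) = - dot n (\<lambda>i. u i - z b i) (\<lambda>i. u i - z b i) / 2"
      unfolding L_eq by (simp only:)
    then show ?thesis unfolding dot_diff_self by simp
  qed
  note zz = integrable_dot_matvec_zext[OF M_finite[unfolded M_def]]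
  have zz_int: "integrable (G_S g S) (\<lambda>b. dot n (z b) (z b))" "integrable (G_S g S) (\<lambda>b. dot n u (z b))"
    using zz(1,2) by (simp_all add: z_def)
  show "integrable Q L"
    unfolding Q_def T_def[symmetric] integrable_distr_eq[OF T L_measurable] L_T
    using zz_int by auto
  have "(\<integral>b. L b \<partial>Q) = (\<integral>b. - dot n u u / 2 + dot n u (z b) - dot n (z b) (z b) / 2 \<partial>G_S g S)"
    unfolding Q_def T_def[symmetric] integral_distr[OF T L_measurable] L_T ..
  also have "\<dots> = - dot n u u / 2 + (\<integral>b. dot n u (z b) \<partial>G_S g S) - (\<integral>b. dot n (z b) (z b) \<partial>G_S g S) / 2"
    using zz_int by (simp add: G.prob_space)
  also have "\<dots> = ln (lik n p X Y \<beta>s) - enn2real M / 2"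
    using integral_dot_matvec_zext_eq_0[OF \<open>finite S\<close>, of n u X] zz(3)
    by (simp add: z_def M_def lik_eq_exp_dot u_def)
  finally show "(\<integral>b. L b \<partial>Q) = ln (lik n p X Y \<beta>s) - enn2real M / 2" .
qed

lemma nn_integral_lik_G_S_ge:
  fixes n :: nat and X :: "nat \<Rightarrow> nat \<Rightarrow> real" and Y \<beta>s :: "nat \<Rightarrow> real"
  defines "S \<equiv> supp p \<beta>s"
  defines "G \<equiv> G_S g S"
  defines "Q \<equiv> distr G (PiM S (\<lambda>_. borel)) (\<lambda>b. restrict (\<lambda>i. b i + \<beta>s i) S)"
  defines "M \<equiv> \<integral>\<^sup>+ b. ennreal ((vnorm n (matvec p X (zext S b)))\<^sup>2) \<partial>G"
  assumes ac: "absolutely_continuous G Q" and ent: "integrable Q (entropy_density (exp 1) G Q)"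
    and M_finite: "M \<noteq> \<infinity>"
  shows "ennreal (lik n p X Y \<beta>s * exp (- KL_divergence (exp 1) G Q - enn2real M / 2))
     \<le> (\<integral>\<^sup>+ b. ennreal (lik n p X Y (restrict (zext S b) {..<p})) \<partial>G)"
proof -
  interpret G: prob_space G unfolding G_def by (rule prob_space_G_S)
  have "(\<lambda>b. restrict (\<lambda>i. b i + \<beta>s i) S) \<in> measurable G (PiM S (\<lambda>_. borel))"
    unfolding G_def measurable_G_S_iff by measurable
  then interpret Q: prob_space Q unfolding Q_def by (rule G.prob_space_distr)
  have "sets Q = sets G" unfolding Q_def G_def by (simp add: sets_G_S)
  have log_lik: "integrable Q (\<lambda>b. ln (lik n p X Y (restrict (zext S b) {..<p})))"
      "(\<integral>b. ln (lik n p X Y (restrict (zext S b) {..<p})) \<partial>Q) = ln (lik n p X Y \<beta>s) - enn2real M / 2"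
    using log_lik_shifted_slab[where n=n and X=X and Y=Y and \<beta>s=\<beta>s] M_finite
    unfolding S_def G_def Q_def M_def by auto
  have "lik n p X Y \<beta>s * exp (- KL_divergence (exp 1) G Q - enn2real M / 2)
      = exp (ln (lik n p X Y \<beta>s) + (- KL_divergence (exp 1) G Q - enn2real M / 2))"
    by (simp only: exp_add exp_ln[OF lik_pos])
  also have "\<dots> = exp ((\<integral>b. ln (lik n p X Y (restrict (zext S b) {..<p})) \<partial>Q) - KL_divergence (exp 1) G Q)"
    unfolding log_lik(2) by (simp add: algebra_simps)
  finally have "ennreal (lik n p X Y \<beta>s * exp (- KL_divergence (exp 1) G Q - enn2real M / 2))
      \<le> (\<integral>\<^sup>+ b. ennreal (exp (ln (lik n p X Y (restrict (zext S b) {..<p})))) \<partial>G)"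
    using nn_integral_exp_ge_KL_divergence[OF G.prob_space_axioms Q.prob_space_axioms
          \<open>sets Q = sets G\<close> ac ent log_lik(1)] by simp
  then show ?thesis by (simp add: lik_pos)
qed

end

section \<open>The prior mass of the likelihood\<close>

lemma D_beta_finiteD:
  fixes n p :: nat and \<pi> :: "nat pmf" and g :: "real \<Rightarrow> real" and X :: "nat \<Rightarrow> nat \<Rightarrow> real" and \<beta>s :: "nat \<Rightarrow> real"
  defines "S \<equiv> supp p \<beta>s"
  defines "G \<equiv> G_S g S"
  defines "Q \<equiv> distr G (PiM S (\<lambda>_. borel)) (\<lambda>b. restrict (\<lambda>i. b i + \<beta>s i) S)"
  defines "M \<equiv> \<integral>\<^sup>+ b. ennreal ((vnorm n (matvec p X (zext S b)))\<^sup>2) \<partial>G"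
  assumes "D_beta n \<pi> g X p \<beta>s \<noteq> \<infinity>"
  shows "0 < pmf \<pi> (card S)" and "absolutely_continuous G Q"
    and "integrable Q (entropy_density (exp 1) G Q)" and "M \<noteq> \<infinity>"
    and "real_of_ereal (D_beta n \<pi> g X p \<beta>s)
         = real (p choose card S) / pmf \<pi> (card S) * exp (KL_divergence (exp 1) G Q + enn2real M / 2)"
proof -
  have D_eq: "D_beta n \<pi> g X p \<beta>s = (if pmf \<pi> (card S) = 0 \<or> KL Q G = \<infinity> \<or> M = \<infinity> then \<infinity>
      else ereal (real (p choose card S) / pmf \<pi> (card S) * exp (real_of_ereal (KL Q G) + enn2real M / 2)))"
    unfolding D_beta_def Let_def S_def G_def Q_def M_def ..
  then have "pmf \<pi> (card S) \<noteq> 0" and KL: "KL Q G \<noteq> \<infinity>" and "M \<noteq> \<infinity>"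
    using assms(5) by (auto split: if_splits)
  then show "0 < pmf \<pi> (card S)" and "M \<noteq> \<infinity>"
    using pmf_nonneg[of \<pi> "card S"] by auto
  show "absolutely_continuous G Q" and "integrable Q (entropy_density (exp 1) G Q)"
    using KL unfolding KL_def by (auto split: if_splits)
  then have "KL Q G = ereal (KL_divergence (exp 1) G Q)"
    unfolding KL_def by simp
  then show "real_of_ereal (D_beta n \<pi> g X p \<beta>s)
      = real (p choose card S) / pmf \<pi> (card S) * exp (KL_divergence (exp 1) G Q + enn2real M / 2)"
    using \<open>pmf \<pi> (card S) \<noteq> 0\<close> \<open>M \<noteq> \<infinity>\<close> KL by (simp add: D_eq)
qed

lemma D_beta_pos:
  assumes "D_beta n \<pi> g X p \<beta>s \<noteq> \<infinity>"
  shows "0 < real_of_ereal (D_beta n \<pi> g X p \<beta>s)"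
proof -
  have "card (supp p \<beta>s) \<le> p"
    using card_mono[of "{..<p}" "supp p \<beta>s"] by (auto simp: supp_def)
  then show ?thesis
    using D_beta_finiteD[OF assms] by (simp add: zero_less_binomial)
qed

context spike_and_slab
begin

lemma nn_integral_prior_lik_ge:
  assumes D: "D_beta n \<pi> g X p \<beta>s \<noteq> \<infinity>"
  shows "ennreal (lik n p X Y \<beta>s / real_of_ereal (D_beta n \<pi> g X p \<beta>s))
       \<le> (\<integral>\<^sup>+\<beta>. ennreal (lik n p X Y \<beta>) \<partial>prior p \<pi> g)"
proof -
  define S where "S = supp p \<beta>s"
  let ?G = "G_S g S"
  let ?Q = "distr ?G (PiM S (\<lambda>_. borel)) (\<lambda>b. restrict (\<lambda>i. b i + \<beta>s i) S)"
  let ?M = "\<integral>\<^sup>+ b. ennreal ((vnorm n (matvec p X (zext S b)))\<^sup>2) \<partial>?G"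
  let ?K = "KL_divergence (exp 1) ?G ?Q"
  note D_facts = D_beta_finiteD[OF D, folded S_def]
  have S: "S \<subseteq> {..<p}" unfolding S_def supp_def by auto
  have "0 < real (p choose card S)"
    using card_mono[OF _ S] by (simp add: zero_less_binomial)
  moreover have "exp (- ?K - enn2real ?M / 2) = inverse (exp (?K + enn2real ?M / 2))"
    by (simp add: exp_minus[symmetric])
  ultimately have "lik n p X Y \<beta>s / real_of_ereal (D_beta n \<pi> g X p \<beta>s)
      = lik n p X Y \<beta>s * exp (- ?K - enn2real ?M / 2) * pmf (subset_pmf p \<pi>) S"
    using D_facts(1) by (simp add: D_facts(5) pmf_subset_pmf[OF S] field_simps)
  also have "ennreal \<dots> \<le> (\<integral>\<^sup>+ b. ennreal (lik n p X Y (restrict (zext S b) {..<p})) \<partial>G_S g S)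
      * pmf (subset_pmf p \<pi>) S"
    using nn_integral_lik_G_S_ge[where n=n and X=X and Y=Y and \<beta>s=\<beta>s, folded S_def] D_facts(2-4)
    by (subst ennreal_mult') (simp_all add: lik_pos less_imp_le mult_right_mono)
  also have "\<dots> \<le> (\<Sum>T\<in>Pow {..<p}. (\<integral>\<^sup>+b. ennreal (lik n p X Y (restrict (zext T b) {..<p})) \<partial>G_S g T)
      * pmf (subset_pmf p \<pi>) T)"
    using S by (intro member_le_sum) auto
  also have "\<dots> = (\<integral>\<^sup>+\<beta>. ennreal (lik n p X Y \<beta>) \<partial>prior p \<pi> g)"
    by (rule nn_integral_prior[symmetric]) (use measurable_lik in measurable)
  finally show ?thesis .
qed

text \<open>Taking \<open>Y = X \<beta>\<^sup>*\<close> makes the likelihood at \<open>\<beta>\<^sup>*\<close> equal to \<open>1\<close>.\<close>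

lemma D_beta_ge_1:
  assumes D: "D_beta n \<pi> g X p \<beta>s \<noteq> \<infinity>"
  shows "1 \<le> real_of_ereal (D_beta n \<pi> g X p \<beta>s)"
proof -
  have "ennreal (1 / real_of_ereal (D_beta n \<pi> g X p \<beta>s))
      \<le> (\<integral>\<^sup>+\<beta>. ennreal (lik n p X (matvec p X \<beta>s) \<beta>) \<partial>prior p \<pi> g)"
    using nn_integral_prior_lik_ge[OF D, of "matvec p X \<beta>s"] by (simp add: lik_matvec_self)
  also have "\<dots> \<le> 1"
    by (rule nn_integral_prior_le_1) (use measurable_lik lik_le_1 in auto)
  finally show ?thesis
    using D_beta_pos[OF D] by (simp add: field_simps)
qed

end

section \<open>The likelihood ratio away from \<open>\<beta>\<^sup>*\<close>\<close>

lemma rate_exponent_bound: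
  fixes x A R t :: real
  assumes "0 \<le> A" "0 \<le> t" "6 * A + t \<le> x"
  shows "x * R + A * x - x\<^sup>2 / 2 \<le> 12/13 * R\<^sup>2 - t\<^sup>2 / 16"
proof -
  have "0 \<le> x" using assms by linarith
  have "A * x \<le> x\<^sup>2 / 6"
    using mult_right_mono[of "6 * A" x x] assms \<open>0 \<le> x\<close> by (simp add: power2_eq_square)
  moreover have "x * R - x\<^sup>2 / 3 \<le> 12/13 * R\<^sup>2 - x\<^sup>2 / 16"
    using zero_le_power2[of "R - 13/24 * x"] by (simp add: power2_eq_square algebra_simps)
  moreover have "t\<^sup>2 \<le> x\<^sup>2"
    using assms by (intro power_mono) auto
  ultimately show ?thesis by linarith
qed

text \<open>With \<open>v = m - m\<^sup>*\<close> the log-ratio is \<open>\<langle>Y - m\<^sup>*, v\<rangle> - |v|\<^sup>2/2\<close>. The noise part of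
  \<open>\<langle>Y - m\<^sup>*, v\<rangle>\<close> only sees the projection onto the span of \<open>e\<close>, and the bias part is at most
  \<open>|m\<^sup>* - m\<^sub>0| |v| \<le> |v|\<^sup>2/6\<close>; completing the square gives the constants.\<close>

lemma gaussian_likelihood_ratio_le:
  assumes span: "spanned_by n k e (\<lambda>i. m i - ms i)" and "0 \<le> t"
    and far: "7 * vnorm n (\<lambda>i. ms i - m0 i) + t < vnorm n (\<lambda>i. m i - m0 i)"
  shows "exp (- dot n (\<lambda>i. Y i - m i) (\<lambda>i. Y i - m i) / 2)
     \<le> exp (- dot n (\<lambda>i. Y i - ms i) (\<lambda>i. Y i - ms i) / 2)
       * exp (12/13 * proj_norm_sq n k e (\<lambda>i. Y i - m0 i) - t\<^sup>2 / 16)"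
proof -
  define v where "v = (\<lambda>i. m i - ms i)"
  define a where "a = (\<lambda>i. m0 i - ms i)"
  define \<epsilon> where "\<epsilon> = (\<lambda>i. Y i - m0 i)"
  define w where "w = (\<lambda>i. Y i - ms i)"
  define R where "R = sqrt (proj_norm_sq n k e \<epsilon>)"
  have "vnorm n (\<lambda>i. m i - m0 i) \<le> vnorm n v + vnorm n (\<lambda>i. ms i - m0 i)"
    using vnorm_add_le[of n v "\<lambda>i. ms i - m0 i"] by (simp add: v_def)
  moreover have "vnorm n a = vnorm n (\<lambda>i. ms i - m0 i)"
    unfolding a_def by (rule vnorm_minus_commute)
  ultimately have "6 * vnorm n a + t \<le> vnorm n v"
    using far by linarith
  have "dot n w v - dot n v v / 2 = dot n \<epsilon> v + dot n a v - dot n v v / 2"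
    using dot_add_left[of n \<epsilon> a v] by (simp add: w_def \<epsilon>_def a_def)
  also have "\<dots> \<le> vnorm n v * R + vnorm n a * vnorm n v - (vnorm n v)\<^sup>2 / 2"
    using dot_le_vnorm_mult_proj[OF span[folded v_def], of \<epsilon>] dot_le_vnorm_mult[of n a v]
    by (simp add: R_def vnorm_sq)
  also have "\<dots> \<le> 12/13 * R\<^sup>2 - t\<^sup>2 / 16"
    using \<open>6 * vnorm n a + t \<le> vnorm n v\<close> \<open>0 \<le> t\<close> by (intro rate_exponent_bound) (simp_all add: vnorm_nonneg)
  also have "R\<^sup>2 = proj_norm_sq n k e \<epsilon>"
    by (simp add: R_def proj_norm_sq_nonneg)
  finally have "dot n w v - dot n v v / 2 \<le> 12/13 * proj_norm_sq n k e \<epsilon> - t\<^sup>2 / 16" .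
  moreover have "(\<lambda>i. Y i - m i) = (\<lambda>i. w i - v i)" by (simp add: w_def v_def)
  ultimately show ?thesis
    unfolding \<epsilon>_def[symmetric] w_def[symmetric] by (simp add: dot_diff_self exp_add[symmetric])
qed

lemma lik_le_of_far:
  assumes S: "S \<subseteq> {..<p}"
    and span_\<beta>s: "spanned_by n k e (matvec p X \<beta>s)"
    and span_X: "\<And>j. j \<in> S \<Longrightarrow> spanned_by n k e (\<lambda>i. X i j)"
    and "0 \<le> t"
    and far: "7 * vnorm n (matvec p X (\<lambda>j. \<beta>s j - \<beta>0 j)) + t
               < vnorm n (matvec p X (\<lambda>j. restrict (zext S b) {..<p} j - \<beta>0 j))"
  shows "lik n p X Y (restrict (zext S b) {..<p})
     \<le> lik n p X Y \<beta>s * exp (12/13 * proj_norm_sq n k e (\<lambda>i. Y i - matvec p X \<beta>0 i) - t\<^sup>2 / 16)"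
proof -
  define m where "m = matvec p X (restrict (zext S b) {..<p})"
  have "spanned_by n k e (\<lambda>i. (\<Sum>j\<in>S. b j * X i j) + (-1) * matvec p X \<beta>s i)"
    using S finite_subset by (intro spanned_by_add spanned_by_sum spanned_by_scale span_X span_\<beta>s) auto
  then have "spanned_by n k e (\<lambda>i. m i - matvec p X \<beta>s i)"
    unfolding m_def matvec_zext_eq_sum[OF S] by simp
  moreover have "7 * vnorm n (\<lambda>i. matvec p X \<beta>s i - matvec p X \<beta>0 i) + t
      < vnorm n (\<lambda>i. m i - matvec p X \<beta>0 i)"
    using far unfolding matvec_diff m_def .
  ultimately show ?thesis
    using gaussian_likelihood_ratio_le[OF _ \<open>0 \<le> t\<close>] unfolding lik_eq_exp_dot m_def by blast
qed

section \<open>Posterior concentration\<close>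

definition far_set :: "nat \<Rightarrow> nat \<Rightarrow> (nat \<Rightarrow> nat \<Rightarrow> real) \<Rightarrow> (nat \<Rightarrow> real) \<Rightarrow> (nat \<Rightarrow> real) \<Rightarrow> real
    \<Rightarrow> (nat \<Rightarrow> real) set" where
  "far_set n p X \<beta>0 \<beta>s t =
     {\<beta>. vnorm n (matvec p X (\<lambda>j. \<beta> j - \<beta>0 j)) > 7 * vnorm n (matvec p X (\<lambda>j. \<beta>s j - \<beta>0 j)) + t}"

lemma measurable_indicator_far_set_lik:
  "(\<lambda>\<beta>. indicator (far_set n p X \<beta>0 \<beta>s t) \<beta> * lik n p X Y \<beta>) \<in> borel_measurable (PiM {..<p} (\<lambda>_. borel))"
  unfolding far_set_def indicator_def vnorm_def matvec_def by (measurable, use measurable_lik in simp)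

lemma sqrt_sum_le_sum_sqrt:
  assumes "\<And>a. a \<in> A \<Longrightarrow> 0 \<le> f a"
  shows "sqrt (\<Sum>a\<in>A. f a) \<le> (\<Sum>a\<in>A. sqrt (f a))"
  using L2_set_le_sum[of A "\<lambda>a. sqrt (f a)"] assms by (simp add: L2_set_def)

lemma nn_integral_nonneg_combination:
  assumes "finite I" "\<And>i. i \<in> I \<Longrightarrow> 0 \<le> a i"
    and "\<And>i. i \<in> I \<Longrightarrow> f i \<in> borel_measurable M" "\<And>i x. 0 \<le> f i x"
  shows "(\<integral>\<^sup>+x. ennreal (\<Sum>i\<in>I. a i * f i x) \<partial>M) = (\<Sum>i\<in>I. ennreal (a i) * \<integral>\<^sup>+x. ennreal (f i x) \<partial>M)"
proof -
  have "(\<integral>\<^sup>+x. ennreal (\<Sum>i\<in>I. a i * f i x) \<partial>M) = (\<integral>\<^sup>+x. (\<Sum>i\<in>I. ennreal (a i) * ennreal (f i x)) \<partial>M)"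
    using assms(2,4) by (intro nn_integral_cong) (simp add: sum_ennreal[symmetric] ennreal_mult)
  also have "\<dots> = (\<Sum>i\<in>I. ennreal (a i) * \<integral>\<^sup>+x. ennreal (f i x) \<partial>M)"
    using assms(3) by (simp add: nn_integral_sum nn_integral_cmult)
  finally show ?thesis .
qed

lemma divide_le_sqrt:
  fixes N Z c K :: real
  assumes "0 \<le> N" "N \<le> Z" "0 < c" "c \<le> Z" "N \<le> c * K"
  shows "N / Z \<le> sqrt K"
proof -
  have "0 \<le> N / Z" "N / Z \<le> 1" using assms by auto
  have "N / Z \<le> N / c" using assms by (intro divide_left_mono) auto
  also have "N / c \<le> K" using assms by (simp add: pos_divide_le_eq mult.commute)
  finally have "N / Z \<le> K" .
  show ?thesis
  proof (cases "K \<le> 1")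
    case True
    then have "K \<le> sqrt K"
      using \<open>0 \<le> N / Z\<close> \<open>N / Z \<le> K\<close> by (intro real_le_rsqrt) (simp add: power2_eq_square mult_left_le)
    with \<open>N / Z \<le> K\<close> show ?thesis by simp
  next
    case False
    then have "1 \<le> sqrt K" by simp
    with \<open>N / Z \<le> 1\<close> show ?thesis by linarith
  qed
qed

lemma exists_orthonormal_bases:
  fixes X :: "nat \<Rightarrow> nat \<Rightarrow> real"
  obtains k e where "\<And>S. S \<subseteq> {..<p} \<Longrightarrow> k S \<le> card S + 1 \<and> orthonormal n (k S) (e S)
      \<and> spanned_by n (k S) (e S) v \<and> (\<forall>j\<in>S. spanned_by n (k S) (e S) (\<lambda>i. X i j))"
proof -
  have "\<exists>k e. k \<le> card S + 1 \<and> orthonormal n k e \<and> spanned_by n k e v \<and> (\<forall>j\<in>S. spanned_by n k e (\<lambda>i. X i j))"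
    if S: "S \<subseteq> {..<p}" for S
  proof -
    define V where "V = insert v ((\<lambda>j i. X i j) ` S)"
    have "finite S" using S finite_subset by auto
    then have "card V \<le> card S + 1"
      unfolding V_def using card_image_le[of S "\<lambda>j i. X i j"] card_insert_le_m1 by fastforce
    moreover obtain k e where "k \<le> card V" "orthonormal n k e" "\<forall>w\<in>V. spanned_by n k e w"
      using exists_orthonormal_spanning[of V n] \<open>finite S\<close> unfolding V_def by blast
    ultimately show ?thesis unfolding V_def by (intro exI[of _ k] exI[of _ e]) auto
  qed
  then show ?thesis using that by metis
qed

lemma nn_integral_data_law_exp_proj_norm_sq:
  assumes "orthonormal n k e"
  shows "(\<integral>\<^sup>+Y. ennreal (exp (6/13 * proj_norm_sq n k e (\<lambda>i. Y i - matvec p X \<beta>0 i))) \<partial>data_law n p X \<beta>0)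
    = ennreal (sqrt 13 ^ k)"
  unfolding data_law_def using nn_integral_exp_proj_norm_sq[OF assms, of "6/13"]
  by (simp add: real_sqrt_divide)

lemma sqrt_exp: "sqrt (exp x) = exp (x / 2)"
  by (rule real_sqrt_unique) (simp_all add: power2_eq_square exp_add[symmetric])

lemma exp_rate_bound:
  fixes C D r t :: real
  assumes "1 \<le> C" "1 \<le> D" "1 \<le> r" "t = 4 * sqrt (ln (C\<^sup>2 * D)) + 8 * sqrt r"
  shows "sqrt 13 * sqrt D * exp (- t\<^sup>2 / 32) * C \<le> 4 * exp (- r)"
proof -
  define L where "L = ln (C\<^sup>2 * D)"
  have "1 \<le> C\<^sup>2 * D" using assms one_le_power[of C 2] mult_mono[of 1 "C\<^sup>2" 1 D] by simp
  then have "0 \<le> L" and "exp L = C\<^sup>2 * D" by (simp_all add: L_def)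
  then have C_sqrt_D: "C * sqrt D = exp (L / 2)"
    using assms(1) by (simp add: sqrt_exp[symmetric] real_sqrt_mult)
  have "t = 4 * sqrt L + 8 * sqrt r" by (simp add: assms(4) L_def)
  then have "t\<^sup>2 = 16 * (sqrt L * sqrt L) + 64 * (sqrt L * sqrt r) + 64 * (sqrt r * sqrt r)"
    unfolding power2_eq_square by algebra
  also have "\<dots> = 16 * L + 64 * (sqrt L * sqrt r) + 64 * r"
    using \<open>0 \<le> L\<close> assms(3) by simp
  finally have "t\<^sup>2 = 16 * L + 64 * (sqrt L * sqrt r) + 64 * r" .
  then have "exp (- t\<^sup>2 / 32) \<le> exp (- L / 2 - 2 * r)"
    using \<open>0 \<le> L\<close> assms(3) by simp
  then have "sqrt 13 * sqrt D * exp (- t\<^sup>2 / 32) * C \<le> sqrt 13 * (C * sqrt D) * exp (- L / 2 - 2 * r)"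
    using assms by (simp add: mult_left_mono mult.commute mult.left_commute)
  also have "\<dots> = sqrt 13 * exp (- 2 * r)"
    unfolding C_sqrt_D by (simp add: exp_add[symmetric])
  also have "\<dots> \<le> 4 * exp (- r)"
    using assms(3) by (intro mult_mono) (auto simp: real_sqrt_le_iff[of 13 "4\<^sup>2", simplified])
  finally show ?thesis .
qed

context spike_and_slab
begin

lemma nn_integral_prior_far_set_lik_le:
  assumes "0 \<le> t"
    and basis: "\<And>S. S \<subseteq> {..<p} \<Longrightarrow> spanned_by n (k S) (e S) (matvec p X \<beta>s)
                  \<and> (\<forall>j\<in>S. spanned_by n (k S) (e S) (\<lambda>i. X i j))"
  shows "(\<integral>\<^sup>+\<beta>. ennreal (indicator (far_set n p X \<beta>0 \<beta>s t) \<beta> * lik n p X Y \<beta>) \<partial>prior p \<pi> g)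
    \<le> ennreal (lik n p X Y \<beta>s * (\<Sum>S\<in>Pow {..<p}. pmf (subset_pmf p \<pi>) S
         * exp (12/13 * proj_norm_sq n (k S) (e S) (\<lambda>i. Y i - matvec p X \<beta>0 i) - t\<^sup>2 / 16)))"
proof -
  define E where "E S = exp (12/13 * proj_norm_sq n (k S) (e S) (\<lambda>i. Y i - matvec p X \<beta>0 i) - t\<^sup>2 / 16)" for S
  define f where "f \<beta> = indicator (far_set n p X \<beta>0 \<beta>s t) \<beta> * lik n p X Y \<beta>" for \<beta>
  have "0 \<le> lik n p X Y \<beta>s * E S" for S
    using lik_pos[of n p X Y \<beta>s] by (simp add: E_def)
  have f_le: "f (restrict (zext S b) {..<p}) \<le> lik n p X Y \<beta>s * E S" if S: "S \<subseteq> {..<p}" for S b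
  proof (cases "restrict (zext S b) {..<p} \<in> far_set n p X \<beta>0 \<beta>s t")
    case True
    then have "lik n p X Y (restrict (zext S b) {..<p}) \<le> lik n p X Y \<beta>s * E S"
      unfolding E_def using basis[OF S] \<open>0 \<le> t\<close>
      by (intro lik_le_of_far[OF S]) (simp_all add: far_set_def)
    with True show ?thesis by (simp add: f_def)
  next
    case False
    with \<open>0 \<le> lik n p X Y \<beta>s * E S\<close> show ?thesis by (simp add: f_def)
  qed
  have "(\<integral>\<^sup>+b. ennreal (f (restrict (zext S b) {..<p})) \<partial>G_S g S) \<le> ennreal (lik n p X Y \<beta>s * E S)"
    if "S \<subseteq> {..<p}" for S
    using nn_integral_mono[OF ennreal_leI[OF f_le[OF that]], of "G_S g S"]
    by (simp add: prob_space.emeasure_space_1[OF prob_space_G_S])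
  then have "(\<integral>\<^sup>+\<beta>. ennreal (f \<beta>) \<partial>prior p \<pi> g)
      \<le> (\<Sum>S\<in>Pow {..<p}. ennreal (lik n p X Y \<beta>s * E S) * ennreal (pmf (subset_pmf p \<pi>) S))"
    unfolding f_def
    unfolding nn_integral_prior[OF measurable_indicator_far_set_lik[THEN measurable_compose, OF measurable_ennreal]]
    unfolding f_def[symmetric]
    by (intro sum_mono mult_right_mono) auto
  also have "\<dots> = (\<Sum>S\<in>Pow {..<p}. ennreal (lik n p X Y \<beta>s * (pmf (subset_pmf p \<pi>) S * E S)))"
    using \<open>\<And>S. 0 \<le> lik n p X Y \<beta>s * E S\<close> by (intro sum.cong refl) (simp add: ennreal_mult[symmetric] mult_ac)
  also have "\<dots> = ennreal (lik n p X Y \<beta>s * (\<Sum>S\<in>Pow {..<p}. pmf (subset_pmf p \<pi>) S * E S))"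
    using lik_pos[of n p X Y \<beta>s] by (simp add: sum_ennreal sum_distrib_left E_def)
  finally show ?thesis unfolding E_def f_def .
qed

lemma posterior_eq_nn_integral:
  assumes "(\<lambda>\<beta>. indicator B \<beta> * lik n p X Y \<beta>) \<in> borel_measurable (PiM {..<p} (\<lambda>_. borel))"
  shows "posterior n p X (prior p \<pi> g) Y B
    = enn2real (\<integral>\<^sup>+\<beta>. ennreal (indicator B \<beta> * lik n p X Y \<beta>) \<partial>prior p \<pi> g)
      / enn2real (\<integral>\<^sup>+\<beta>. ennreal (lik n p X Y \<beta>) \<partial>prior p \<pi> g)"
proof -
  have "(\<integral>\<beta>. indicator B \<beta> * lik n p X Y \<beta> \<partial>prior p \<pi> g)
      = enn2real (\<integral>\<^sup>+\<beta>. ennreal (indicator B \<beta> * lik n p X Y \<beta>) \<partial>prior p \<pi> g)"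
    using assms unfolding measurable_prior_iff[symmetric]
    by (rule integral_eq_nn_integral) (simp add: lik_pos less_imp_le)
  moreover have "(\<integral>\<beta>. lik n p X Y \<beta> \<partial>prior p \<pi> g) = enn2real (\<integral>\<^sup>+\<beta>. ennreal (lik n p X Y \<beta>) \<partial>prior p \<pi> g)"
    using measurable_lik[of n p X Y] unfolding measurable_prior_iff[symmetric]
    by (rule integral_eq_nn_integral) (simp add: lik_pos less_imp_le)
  ultimately show ?thesis
    unfolding posterior_def by simp
qed

lemma posterior_far_set_le:
  assumes D: "D_beta n \<pi> g X p \<beta>s \<noteq> \<infinity>" and "0 \<le> t"
    and basis: "\<And>S. S \<subseteq> {..<p} \<Longrightarrow> spanned_by n (k S) (e S) (matvec p X \<beta>s)
                  \<and> (\<forall>j\<in>S. spanned_by n (k S) (e S) (\<lambda>i. X i j))"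
  shows "posterior n p X (prior p \<pi> g) Y (far_set n p X \<beta>0 \<beta>s t)
    \<le> sqrt (real_of_ereal (D_beta n \<pi> g X p \<beta>s)) * exp (- t\<^sup>2 / 32) * (\<Sum>S\<in>Pow {..<p}.
         sqrt (pmf (subset_pmf p \<pi>) S) * exp (6/13 * proj_norm_sq n (k S) (e S) (\<lambda>i. Y i - matvec p X \<beta>0 i)))"
proof -
  define Dr where "Dr = real_of_ereal (D_beta n \<pi> g X p \<beta>s)"
  define P where "P S = proj_norm_sq n (k S) (e S) (\<lambda>i. Y i - matvec p X \<beta>0 i)" for S
  define W where "W S = pmf (subset_pmf p \<pi>) S * exp (12/13 * P S - t\<^sup>2 / 16)" for S
  define f where "f \<beta> = indicator (far_set n p X \<beta>0 \<beta>s t) \<beta> * lik n p X Y \<beta>" for \<beta>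
  have "0 < Dr" unfolding Dr_def using D by (rule D_beta_pos)
  have "0 < lik n p X Y \<beta>s" by (rule lik_pos)
  have lik_finite: "(\<integral>\<^sup>+\<beta>. ennreal (lik n p X Y \<beta>) \<partial>prior p \<pi> g) < \<top>"
    using measurable_lik lik_le_1 by (intro le_less_trans[OF nn_integral_prior_le_1]) auto
  define N where "N = enn2real (\<integral>\<^sup>+\<beta>. ennreal (f \<beta>) \<partial>prior p \<pi> g)"
  define Z where "Z = enn2real (\<integral>\<^sup>+\<beta>. ennreal (lik n p X Y \<beta>) \<partial>prior p \<pi> g)"
  have posterior_eq: "posterior n p X (prior p \<pi> g) Y (far_set n p X \<beta>0 \<beta>s t) = N / Z"
    unfolding N_def Z_def f_def by (rule posterior_eq_nn_integral[OF measurable_indicator_far_set_lik])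
  have "f \<beta> \<le> lik n p X Y \<beta>" for \<beta>
    using lik_pos[of n p X Y \<beta>] by (simp add: f_def indicator_def)
  then have "N \<le> Z"
    unfolding N_def Z_def using lik_finite by (intro enn2real_mono nn_integral_mono ennreal_leI)
  moreover have "lik n p X Y \<beta>s / Dr \<le> Z"
    using enn2real_mono[OF nn_integral_prior_lik_ge[OF D, of Y] lik_finite] \<open>0 < Dr\<close> \<open>0 < lik n p X Y \<beta>s\<close>
    unfolding Z_def Dr_def by simp
  moreover have "N \<le> lik n p X Y \<beta>s * (\<Sum>S\<in>Pow {..<p}. W S)"
    unfolding N_def f_def W_def P_def
    using nn_integral_prior_far_set_lik_le[where k=k and e=e, OF \<open>0 \<le> t\<close> basis]
    by (intro enn2real_leI) (auto intro!: sum_nonneg mult_nonneg_nonneg less_imp_le[OF lik_pos])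
  moreover have "lik n p X Y \<beta>s / Dr * (\<Sum>S\<in>Pow {..<p}. Dr * W S) = lik n p X Y \<beta>s * (\<Sum>S\<in>Pow {..<p}. W S)"
    using \<open>0 < Dr\<close> by (simp add: sum_distrib_left[symmetric])
  ultimately have "N / Z \<le> sqrt (\<Sum>S\<in>Pow {..<p}. Dr * W S)"
    using \<open>0 < Dr\<close> \<open>0 < lik n p X Y \<beta>s\<close>
    by (intro divide_le_sqrt[of N Z "lik n p X Y \<beta>s / Dr"]) (simp_all add: N_def)
  also have "\<dots> \<le> (\<Sum>S\<in>Pow {..<p}. sqrt (Dr * W S))"
    using \<open>0 < Dr\<close> by (intro sqrt_sum_le_sum_sqrt) (simp add: W_def)
  also have "\<dots> = (\<Sum>S\<in>Pow {..<p}. sqrt Dr * exp (- t\<^sup>2 / 32) * (sqrt (pmf (subset_pmf p \<pi>) S) * exp (6/13 * P S)))"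
  proof (intro sum.cong refl)
    fix S
    have "sqrt (exp (12/13 * P S - t\<^sup>2 / 16)) = exp (- t\<^sup>2 / 32) * exp (6/13 * P S)"
      by (simp add: sqrt_exp exp_add[symmetric])
    then show "sqrt (Dr * W S) = sqrt Dr * exp (- t\<^sup>2 / 32) * (sqrt (pmf (subset_pmf p \<pi>) S) * exp (6/13 * P S))"
      unfolding W_def real_sqrt_mult by (simp only: mult_ac)
  qed
  finally show ?thesis
    unfolding posterior_eq Dr_def P_def sum_distrib_left .
qed

lemma nn_integral_sum_exp_proj_norm_sq_le:
  assumes "0 \<le> c"
    and basis: "\<And>S. S \<subseteq> {..<p} \<Longrightarrow> k S \<le> card S + 1 \<and> orthonormal n (k S) (e S)"
  shows "(\<integral>\<^sup>+Y. ennreal (c * (\<Sum>S\<in>Pow {..<p}. sqrt (pmf (subset_pmf p \<pi>) S)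
      * exp (6/13 * proj_norm_sq n (k S) (e S) (\<lambda>i. Y i - matvec p X \<beta>0 i)))) \<partial>data_law n p X \<beta>0)
    \<le> ennreal (sqrt 13 * c * C_pi p \<pi>)"
proof -
  define a where "a S = c * sqrt (pmf (subset_pmf p \<pi>) S)" for S
  have a_nonneg: "0 \<le> a S" for S
    unfolding a_def using \<open>0 \<le> c\<close> by simp
  have "(\<integral>\<^sup>+Y. ennreal (c * (\<Sum>S\<in>Pow {..<p}. sqrt (pmf (subset_pmf p \<pi>) S)
      * exp (6/13 * proj_norm_sq n (k S) (e S) (\<lambda>i. Y i - matvec p X \<beta>0 i)))) \<partial>data_law n p X \<beta>0)
      = (\<Sum>S\<in>Pow {..<p}. ennreal (a S) * \<integral>\<^sup>+Y. ennreal (exp (6/13 * proj_norm_sq n (k S) (e S)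
          (\<lambda>i. Y i - matvec p X \<beta>0 i))) \<partial>data_law n p X \<beta>0)"
    unfolding sum_distrib_left mult.assoc[symmetric] a_def[symmetric]
    using a_nonneg by (intro nn_integral_nonneg_combination) (auto simp: data_law_def proj_norm_sq_def dot_def)
  also have "\<dots> = (\<Sum>S\<in>Pow {..<p}. ennreal (a S) * ennreal (sqrt 13 ^ k S))"
    by (intro sum.cong refl, subst nn_integral_data_law_exp_proj_norm_sq) (use basis in auto)
  also have "\<dots> = ennreal (\<Sum>S\<in>Pow {..<p}. a S * sqrt 13 ^ k S)"
    using a_nonneg by (simp add: ennreal_mult sum_ennreal[symmetric])
  also have "(\<Sum>S\<in>Pow {..<p}. a S * sqrt 13 ^ k S) \<le> (\<Sum>S\<in>Pow {..<p}. a S * sqrt 13 ^ (card S + 1))"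
    using basis a_nonneg by (intro sum_mono mult_left_mono power_increasing) auto
  also have "\<dots> = sqrt 13 * c * (\<Sum>S\<in>Pow {..<p}. sqrt (pmf (subset_pmf p \<pi>) S) * sqrt 13 ^ card S)"
    by (simp add: a_def sum_distrib_left mult_ac)
  also have "\<dots> \<le> sqrt 13 * c * C_pi p \<pi>"
    using \<open>0 \<le> c\<close> by (intro mult_left_mono sum_sqrt_subset_pmf_le_C_pi) simp
  finally show ?thesis by (simp add: ennreal_leI)
qed

lemma expected_posterior_rate_set_le:
  assumes "1 \<le> r"
  shows "(\<integral>Y. posterior n p X (prior p \<pi> g) Y (rate_set n p \<pi> g X \<beta>0 \<beta>s r) \<partial>data_law n p X \<beta>0)
    \<le> 4 * exp (- r)"
proof (cases "D_beta n \<pi> g X p \<beta>s = \<infinity>")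
  case True
  then show ?thesis by (simp add: rate_set_def posterior_def)
next
  case False
  define D where "D = real_of_ereal (D_beta n \<pi> g X p \<beta>s)"
  define t where "t = 4 * sqrt (ln ((C_pi p \<pi>)\<^sup>2 * D)) + 8 * sqrt r"
  have "1 \<le> D" unfolding D_def using False by (rule D_beta_ge_1)
  then have "0 \<le> t"
    using C_pi_ge_1 \<open>1 \<le> r\<close> one_le_power[of "C_pi p \<pi>" 2] mult_mono[of 1 "(C_pi p \<pi>)\<^sup>2" 1 D]
    by (simp add: t_def)
  have rate_set: "rate_set n p \<pi> g X \<beta>0 \<beta>s r = far_set n p X \<beta>0 \<beta>s t"
    using False by (simp add: rate_set_def far_set_def t_def D_def add.assoc)
  obtain k e where basis: "\<And>S. S \<subseteq> {..<p} \<Longrightarrow> k S \<le> card S + 1 \<and> orthonormal n (k S) (e S)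
      \<and> spanned_by n (k S) (e S) (matvec p X \<beta>s) \<and> (\<forall>j\<in>S. spanned_by n (k S) (e S) (\<lambda>i. X i j))"
    using exists_orthonormal_bases[where p=p and n=n and v="matvec p X \<beta>s" and X=X] by blast
  define H where "H Y = sqrt D * exp (- t\<^sup>2 / 32) * (\<Sum>S\<in>Pow {..<p}.
      sqrt (pmf (subset_pmf p \<pi>) S) * exp (6/13 * proj_norm_sq n (k S) (e S) (\<lambda>i. Y i - matvec p X \<beta>0 i)))" for Y
  have "posterior n p X (prior p \<pi> g) Y (rate_set n p \<pi> g X \<beta>0 \<beta>s r) \<le> H Y" for Y
    unfolding rate_set H_def D_def by (rule posterior_far_set_le[OF False \<open>0 \<le> t\<close>]) (use basis in blast)
  then have "(\<integral>\<^sup>+Y. ennreal (posterior n p X (prior p \<pi> g) Y (rate_set n p \<pi> g X \<beta>0 \<beta>s r)) \<partial>data_law n p X \<beta>0)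
      \<le> (\<integral>\<^sup>+Y. ennreal (H Y) \<partial>data_law n p X \<beta>0)"
    by (intro nn_integral_mono ennreal_leI)
  also have "\<dots> \<le> ennreal (sqrt 13 * (sqrt D * exp (- t\<^sup>2 / 32)) * C_pi p \<pi>)"
    unfolding H_def using basis \<open>1 \<le> D\<close> by (intro nn_integral_sum_exp_proj_norm_sq_le) simp_all
  also have "\<dots> \<le> ennreal (4 * exp (- r))"
    using C_pi_ge_1 \<open>1 \<le> D\<close> \<open>1 \<le> r\<close> exp_rate_bound[OF _ _ _ t_def]
    by (intro ennreal_leI) (simp add: mult.assoc)
  finally show ?thesis
    by (rule integral_real_bounded[rotated]) simp
qed

end

theorem theorem8:
  shows "\<exists>C::real. \<forall>(n::nat) (p::nat) (X::nat \<Rightarrow> nat \<Rightarrow> real) (\<pi>::nat pmf) (g::real \<Rightarrow> real)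
            (\<beta>0::nat \<Rightarrow> real) (\<beta>s::nat \<Rightarrow> real) (r::real).
     set_pmf \<pi> \<subseteq> {..p} \<and> g \<in> borel_measurable lborel \<and> (\<forall>x. 0 \<le> g x) \<and>
     (\<integral>\<^sup>+ x. ennreal (g x) \<partial>lborel) = 1 \<and> (\<forall>x. g (- x) = g x) \<and> 1 \<le> r \<longrightarrow>
     (\<integral>Y. posterior n p X (prior p \<pi> g) Y (rate_set n p \<pi> g X \<beta>0 \<beta>s r) \<partial>(data_law n p X \<beta>0))
       \<le> C * exp (- r)"
proof (intro exI[of _ 4] allI impI)
  fix n p :: nat and X :: "nat \<Rightarrow> nat \<Rightarrow> real" and \<pi> :: "nat pmf" and g :: "real \<Rightarrow> real"
    and \<beta>0 \<beta>s :: "nat \<Rightarrow> real" and r :: real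
  assume assms: "set_pmf \<pi> \<subseteq> {..p} \<and> g \<in> borel_measurable lborel \<and> (\<forall>x. 0 \<le> g x) \<and>
     (\<integral>\<^sup>+ x. ennreal (g x) \<partial>lborel) = 1 \<and> (\<forall>x. g (- x) = g x) \<and> 1 \<le> r"
  interpret spike_and_slab p \<pi> g
    using assms by unfold_locales auto
  show "(\<integral>Y. posterior n p X (prior p \<pi> g) Y (rate_set n p \<pi> g X \<beta>0 \<beta>s r) \<partial>data_law n p X \<beta>0)
      \<le> 4 * exp (- r)"
    using assms by (intro expected_posterior_rate_set_le) simp
qed

end
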